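(* Let $l_0,l_1,l_2$ be pairwise coprime with $1\le l_0\le l_1\le l_2$, $\mathbb{P}=\mathbb{P}(l_0,l_1,l_2)$, $p_0=[1:0:0]$, $p_1=[0:1:0]$, $p_2=[0:0:1]$. For all $d\ge l_2l_1+l_2l_0+l_2$, all $n\in\mathbb{N}$ and every $i\in\{0,1,2\}$, $\mathcal{C}^{p_i}_n(d)\neq\mathsf{Fol}(d)$. Furthermore, if $l_0=l_1=1$ and $l_2\ge2$, then $\mathcal{C}^{p_2}_n(d)\ne\mathsf{Fol}(d)$ for all $d\ge 2l_2+1$ and all $n\in\mathbb{N}$.
   Context: $\mathbb{P}(l_0,l_1,l_2)$ is the quotient of $\mathbb{C}^3\setminus\{0\}$ by $t\cdot(x_0,x_1,x_2)=(t^{l_0}x_0,t^{l_1}x_1,t^{l_2}x_2)$. $\mathsf{Fol}(d)$ is the projectivization of the space of 1-forms $\omega=\sum A_idx_i$ with $A_i$ quasi-homogeneous of degree $d-l_i$ and $\sum l_ix_iA_i=0$. An algebraic curve of degree $n$ is the zero set of a nonconstant quasi-homogeneous polynomial $F$ of degree $n$; it is $[\omega]$-invariant if $\omega\wedge dF=F\Theta$ for some polynomial 2-form $\Theta$. $\mathcal{C}^{p_i}_n(d)$ is the set of $\mathcal{F}\in\mathsf{Fol}(d)$ such that $p_i$ lies on some $\mathcal{F}$-invariant algebraic curve of degree $n$. *)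

theory Defs
  imports Complex_Main "HOL-Library.Product_Plus" "HOL-Library.Poly_Mapping"
begin

text \<open>Polynomials in C[x0,x1,x2]: finitely supported maps from exponent triples
 (a,b,c) (monomial x0^a x1^b x2^c) to coefficients; multiplication is the
 convolution product of Poly_Mapping.\<close>

type_synonym mono = "nat \<times> nat \<times> nat"
type_synonym cpoly = "mono \<Rightarrow>\<^sub>0 complex"
type_synonym form1 = "cpoly \<times> cpoly \<times> cpoly"

definition expo :: "nat \<Rightarrow> mono \<Rightarrow> nat" where
  "expo i m = (if i = 0 then fst m else if i = 1 then fst (snd m) else snd (snd m))"

definition unitv :: "nat \<Rightarrow> mono" where
  "unitv i = (if i = 0 then (1,0,0) else if i = 1 then (0,1,0) else (0,0,1))"

definition wdeg :: "nat \<times> nat \<times> nat \<Rightarrow> mono \<Rightarrow> nat" where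
  "wdeg l m = expo 0 l * expo 0 m + expo 1 l * expo 1 m + expo 2 l * expo 2 m"

text \<open>F is quasi-homogeneous of (integer) degree k (the zero polynomial counts for every k)\<close>
definition qhom :: "nat \<times> nat \<times> nat \<Rightarrow> int \<Rightarrow> cpoly \<Rightarrow> bool" where
  "qhom l k F \<longleftrightarrow> (\<forall>m\<in>Poly_Mapping.keys F. int (wdeg l m) = k)"

definition cst :: "complex \<Rightarrow> cpoly" where
  "cst c = Poly_Mapping.single 0 c"

definition var :: "nat \<Rightarrow> cpoly" where
  "var i = Poly_Mapping.single (unitv i) 1"

definition pd :: "nat \<Rightarrow> cpoly \<Rightarrow> cpoly" where
  "pd i F = (\<Sum>m\<in>Poly_Mapping.keys F. Poly_Mapping.single (m - unitv i) (of_nat (expo i m) * Poly_Mapping.lookup F m))"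

definition evalp :: "cpoly \<Rightarrow> complex \<times> complex \<times> complex \<Rightarrow> complex" where
  "evalp F z = (\<Sum>m\<in>Poly_Mapping.keys F. Poly_Mapping.lookup F m * fst z ^ expo 0 m * fst (snd z) ^ expo 1 m
                                  * snd (snd z) ^ expo 2 m)"

text \<open>component A_i of omega = A0 dx0 + A1 dx1 + A2 dx2\<close>
definition comp :: "nat \<Rightarrow> form1 \<Rightarrow> cpoly" where
  "comp i \<omega> = (if i = 0 then fst \<omega> else if i = 1 then fst (snd \<omega>) else snd (snd \<omega>))"

definition fol_form :: "nat \<times> nat \<times> nat \<Rightarrow> nat \<Rightarrow> form1 \<Rightarrow> bool" where
  "fol_form l d \<omega> \<longleftrightarrow>
     \<omega> \<noteq> (0,0,0) \<and>
     (\<forall>i\<le>2. qhom l (int d - int (expo i l)) (comp i \<omega>)) \<and>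
     (\<Sum>i\<le>2. cst (of_nat (expo i l)) * var i * comp i \<omega>) = 0"

definition scale_form :: "complex \<Rightarrow> form1 \<Rightarrow> form1" where
  "scale_form c \<omega> = (cst c * fst \<omega>, cst c * fst (snd \<omega>), cst c * snd (snd \<omega>))"

text \<open>Fol(d): the projectivization, i.e. the set of C^*-classes of admissible nonzero forms\<close>
definition Fol :: "nat \<times> nat \<times> nat \<Rightarrow> nat \<Rightarrow> form1 set set" where
  "Fol l d = {{scale_form c \<omega> | c. c \<noteq> 0} | \<omega>. fol_form l d \<omega>}"

definition curve_poly :: "nat \<times> nat \<times> nat \<Rightarrow> nat \<Rightarrow> cpoly \<Rightarrow> bool" where
  "curve_poly l n F \<longleftrightarrow> qhom l (int n) F \<and> (\<exists>m\<in>Poly_Mapping.keys F. m \<noteq> 0)"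

text \<open>omega wedge dF = F Theta for a polynomial 2-form Theta; the coefficient of
 dx_i wedge dx_j (i<j) in omega wedge dF is A_i dF/dx_j - A_j dF/dx_i.\<close>
definition invariant :: "form1 \<Rightarrow> cpoly \<Rightarrow> bool" where
  "invariant \<omega> F \<longleftrightarrow> (\<exists>\<Theta> :: nat \<Rightarrow> nat \<Rightarrow> cpoly.
     \<forall>i j. i < j \<and> j \<le> 2 \<longrightarrow>
       comp i \<omega> * pd j F - comp j \<omega> * pd i F = F * \<Theta> i j)"

definition pt :: "nat \<Rightarrow> complex \<times> complex \<times> complex" where
  "pt i = (if i = 0 then (1,0,0) else if i = 1 then (0,1,0) else (0,0,1))"

definition Cpt :: "nat \<times> nat \<times> nat \<Rightarrow> nat \<Rightarrow> nat \<Rightarrow> nat \<Rightarrow> form1 set set" where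
  "Cpt l i n d = {L \<in> Fol l d. \<exists>\<omega>\<in>L. \<exists>F. curve_poly l n F \<and> invariant \<omega> F \<and> evalp F (pt i) = 0}"

end

theory Submission
  imports Defs "HOL-Library.Product_Lexorder" "HOL-Library.Nonpos_Ints"
begin

text \<open>Let \<open>j < k\<close> be the indices other than \<open>i\<close>. The witness is the foliation given by
  \<open>\<omega> = \<iota>\<^sub>R \<iota>\<^sub>X (dx\<^sub>0 \<and> dx\<^sub>1 \<and> dx\<^sub>2)\<close>, with \<open>R\<close> the weighted Euler field and
  \<open>X = X\<^sub>j \<partial>\<^sub>j + X\<^sub>k \<partial>\<^sub>k\<close>, \<open>X\<^sub>j = x\<^bsup>b1\<^esup> + x\<^sub>j x\<^bsup>kap\<^esup>\<close>,
  \<open>X\<^sub>k = x\<^bsup>b2\<^esup> + N x\<^sub>k x\<^bsup>kap\<^esup>\<close>, \<open>N = (\<beta> + 1) n + 1\<close>; the exponents are determined by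
  congruences modulo \<open>l\<^sub>i\<close> and are nonnegative once \<open>d\<close> is large enough. If the curve \<open>F = 0\<close>
  is \<open>\<omega>\<close>-invariant, then \<open>x\<^sub>i X(F) = F \<Theta>\<close>. Degree counting confines the monomials of \<open>\<Theta>\<close>
  so much that averaging over the substitutions \<open>x\<^sub>k \<mapsto> \<zeta>\<^sup>r x\<^sub>k\<close>
  (\<open>\<zeta>\<^bsup>\<beta>+1\<^esup> = 1\<close>) leaves a monomial cofactor \<open>C x\<^bsup>kap'\<^esup>\<close> for the product \<open>G\<close> of
  the conjugates of \<open>F\<close>, which has degree below \<open>N\<close>. Ordering the monomials \<open>x\<^bsup>\<rho>\<^esup>\<close> of
  \<open>G\<close> by \<open>\<rho>\<^sub>j + N \<rho>\<^sub>k\<close> makes \<open>x\<^sub>i X(G) = C x\<^bsup>kap'\<^esup> G\<close> a triangular system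
  with nonnegative coefficients, so all coefficients of \<open>G\<close> are nonnegative multiples of one of
  them. If \<open>F\<close> passes through \<open>p\<^sub>i\<close>, every monomial of \<open>G\<close> contains \<open>x\<^sub>j\<close> or \<open>x\<^sub>k\<close>, and
  then the lowest monomial of \<open>G\<close> produces a term of \<open>x\<^sub>i X(G)\<close> that nothing can cancel.\<close>

section \<open>Monomials\<close>

lemma expo_add [simp]: "expo t (a + b) = expo t a + expo t b"
  by (simp add: expo_def plus_prod_def)

lemma expo_diff [simp]: "expo t (a - b) = expo t a - expo t b"
  by (simp add: expo_def minus_prod_def)

lemma expo_unitv [simp]: "t \<le> 2 \<Longrightarrow> s \<le> 2 \<Longrightarrow> expo t (unitv s) = (if t = s then 1 else 0)"
  by (auto simp: expo_def unitv_def)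

lemma expo_zero [simp]: "expo t 0 = 0"
  by (simp add: expo_def zero_prod_def)

lemma mono_eqI:
  assumes "\<And>t. t \<le> 2 \<Longrightarrow> expo t a = expo t b"
  shows "a = (b :: mono)"
  using assms[of 0] assms[of 1] assms[of 2] by (cases a; cases b) (auto simp: expo_def)

definition mono_of :: "(nat \<Rightarrow> nat) \<Rightarrow> mono" where
  "mono_of g = (g 0, g 1, g 2)"

lemma expo_mono_of [simp]: "t \<le> 2 \<Longrightarrow> expo t (mono_of g) = g t"
  by (auto simp: expo_def mono_of_def le_Suc_eq numeral_2_eq_2)

lemma diff_unitv_eq_iff:
  assumes "t \<le> 2" and "expo t a \<noteq> 0"
  shows "a - unitv t = \<mu> \<longleftrightarrow> a = \<mu> + unitv t"
proof
  assume "a - unitv t = \<mu>"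
  then show "a = \<mu> + unitv t"
    using assms by (intro mono_eqI) (auto dest!: arg_cong[where f = "expo _"] split: if_splits)
qed (use assms in simp)

lemma diff_unitv_add:
  "t \<le> 2 \<Longrightarrow> expo t a \<noteq> 0 \<Longrightarrow> a - unitv t + b = a + b - unitv t"
  by (rule mono_eqI) simp

lemma wdeg_add: "wdeg l (a + b) = wdeg l a + wdeg l b"
  by (simp add: wdeg_def algebra_simps)

lemma wdeg_unitv: "t \<le> 2 \<Longrightarrow> wdeg l (unitv t) = expo t l"
  by (auto simp: wdeg_def unitv_def expo_def)

lemma expo_triple [simp]:
  "expo 0 (a, b, c) = a" "expo 1 (a, b, c) = b" "expo (Suc 0) (a, b, c) = b" "expo 2 (a, b, c) = c"
  by (simp_all add: expo_def)

text \<open>With the lexicographic order, exponent vectors form an ordered cancellative monoid, which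
  makes \<open>cpoly\<close> an integral domain by the instance in \<open>Poly_Mapping\<close>.\<close>

instance prod :: ("{ordered_cancel_comm_monoid_add, linorder}", "{ordered_cancel_comm_monoid_add, linorder}")
  ordered_cancel_comm_monoid_add
proof
  fix a b c :: "'a \<times> 'b"
  assume "a \<le> b"
  then show "c + a \<le> c + b"
    unfolding less_eq_prod_def by (auto simp: add_strict_left_mono add_left_mono)
qed

section \<open>Polynomials as finitely supported maps\<close>

lemma lookup_sum_single:
  "Poly_Mapping.lookup (\<Sum>a\<in>A. Poly_Mapping.single (h a) (v a)) x = (\<Sum>a\<in>A. if h a = x then v a else 0)"
  by (simp add: lookup_sum lookup_single when_def)

lemma poly_mapping_sum_single:
  fixes P :: "'a \<Rightarrow>\<^sub>0 'b::comm_monoid_add"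
  assumes "finite A" and "Poly_Mapping.keys P \<subseteq> A"
  shows "P = (\<Sum>a\<in>A. Poly_Mapping.single a (Poly_Mapping.lookup P a))"
  by (rule poly_mapping_eqI) (use assms in \<open>auto simp: lookup_sum_single in_keys_iff\<close>)

lemma lookup_mult_finite:
  fixes P Q :: "'a::monoid_add \<Rightarrow>\<^sub>0 'b::semiring_0"
  assumes "finite A" "Poly_Mapping.keys P \<subseteq> A" "finite B" "Poly_Mapping.keys Q \<subseteq> B"
  shows "Poly_Mapping.lookup (P * Q) x =
    (\<Sum>a\<in>A. \<Sum>b\<in>B. if a + b = x then Poly_Mapping.lookup P a * Poly_Mapping.lookup Q b else 0)"
proof -
  have "P * Q = (\<Sum>a\<in>A. Poly_Mapping.single a (Poly_Mapping.lookup P a)) *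
                (\<Sum>b\<in>B. Poly_Mapping.single b (Poly_Mapping.lookup Q b))"
    using poly_mapping_sum_single[OF assms(1,2)] poly_mapping_sum_single[OF assms(3,4)] by simp
  also have "\<dots> = (\<Sum>a\<in>A. \<Sum>b\<in>B. Poly_Mapping.single (a + b) (Poly_Mapping.lookup P a * Poly_Mapping.lookup Q b))"
    by (simp add: sum_distrib_left sum_distrib_right mult_single sum.swap[of _ B])
  finally show ?thesis
    by (simp add: lookup_sum lookup_single when_def)
qed

lemma finite_max_obtain:
  fixes f :: "'a \<Rightarrow> 'b::linorder"
  assumes "finite S" and "S \<noteq> {}"
  obtains x where "x \<in> S" "\<And>y. y \<in> S \<Longrightarrow> f y \<le> f x"
proof -
  have "Max (f ` S) \<in> f ` S"
    using assms by (intro Max_in) auto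
  then obtain x where "x \<in> S" "f x = Max (f ` S)"
    by auto
  with assms that show ?thesis
    by (metis Max_ge finite_imageI image_eqI)
qed

lemma finite_min_obtain:
  fixes f :: "'a \<Rightarrow> 'b::linorder"
  assumes "finite S" and "S \<noteq> {}"
  obtains x where "x \<in> S" "\<And>y. y \<in> S \<Longrightarrow> f x \<le> f y"
proof -
  have "Min (f ` S) \<in> f ` S"
    using assms by (intro Min_in) auto
  then obtain x where "x \<in> S" "f x = Min (f ` S)"
    by auto
  with assms that show ?thesis
    by (metis Min_le finite_imageI image_eqI)
qed

lemma add_eq_add_le_imp_eq:
  fixes a b c d :: "'a::ordered_cancel_comm_monoid_add"
  assumes "a \<le> c" and "b \<le> d" and "a + b = c + d"
  shows "a = c \<and> b = d"
proof -
  have "a = c"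
  proof (rule ccontr)
    assume "a \<noteq> c"
    with assms(1) have "a + b < c + d"
      using assms(2) by (intro add_less_le_mono) simp_all
    with assms(3) show False
      by simp
  qed
  with assms(3) show ?thesis
    by simp
qed

lemma lookup_mult_unique_sum:
  fixes P Q :: "'a::monoid_add \<Rightarrow>\<^sub>0 'b::semiring_0"
  assumes "a \<in> Poly_Mapping.keys P" and "b \<in> Poly_Mapping.keys Q"
    and unique: "\<And>x y. x \<in> Poly_Mapping.keys P \<Longrightarrow> y \<in> Poly_Mapping.keys Q \<Longrightarrow> x + y = a + b \<Longrightarrow> x = a \<and> y = b"
  shows "Poly_Mapping.lookup (P * Q) (a + b) = Poly_Mapping.lookup P a * Poly_Mapping.lookup Q b"
proof -
  have "Poly_Mapping.lookup (P * Q) (a + b) =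
    (\<Sum>x\<in>Poly_Mapping.keys P. \<Sum>y\<in>Poly_Mapping.keys Q.
       if x = a \<and> y = b then Poly_Mapping.lookup P x * Poly_Mapping.lookup Q y else 0)"
    unfolding lookup_mult_finite[OF finite_keys order_refl finite_keys order_refl]
  proof (intro sum.cong refl)
    fix x y
    assume "x \<in> Poly_Mapping.keys P" "y \<in> Poly_Mapping.keys Q"
    then have "x + y = a + b \<longleftrightarrow> x = a \<and> y = b"
      using unique by blast
    then show "(if x + y = a + b then Poly_Mapping.lookup P x * Poly_Mapping.lookup Q y else 0) =
      (if x = a \<and> y = b then Poly_Mapping.lookup P x * Poly_Mapping.lookup Q y else 0)"
      by simp
  qed
  also have "\<dots> = (\<Sum>x\<in>Poly_Mapping.keys P. if x = a then
      (\<Sum>y\<in>Poly_Mapping.keys Q. if y = b then Poly_Mapping.lookup P x * Poly_Mapping.lookup Q y else 0) else 0)"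
    by (intro sum.cong) auto
  also have "\<dots> = Poly_Mapping.lookup P a * Poly_Mapping.lookup Q b"
    using assms(1,2) by simp
  finally show ?thesis .
qed

text \<open>Ties in \<open>g\<close> are broken lexicographically, so that the extremal monomial of \<open>P * Q\<close>
  arises from a single pair of monomials.\<close>

lemma keys_mult_max:
  fixes g :: "'a::{ordered_cancel_comm_monoid_add, linorder} \<Rightarrow> int"
    and P Q :: "'a \<Rightarrow>\<^sub>0 'b::semiring_no_zero_divisors"
  assumes g_add: "\<And>a b. g (a + b) = g a + g b" and "P \<noteq> 0" and "Q \<noteq> 0"
  obtains a b where "a \<in> Poly_Mapping.keys P" "b \<in> Poly_Mapping.keys Q"
    "\<And>a'. a' \<in> Poly_Mapping.keys P \<Longrightarrow> g a' \<le> g a"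
    "\<And>b'. b' \<in> Poly_Mapping.keys Q \<Longrightarrow> g b' \<le> g b"
    "a + b \<in> Poly_Mapping.keys (P * Q)"
proof -
  define f where "f x = (g x, x)" for x
  have f_add: "f (x + y) = f x + f y" for x y
    by (simp add: f_def g_add)
  obtain a where a: "a \<in> Poly_Mapping.keys P" "\<And>x. x \<in> Poly_Mapping.keys P \<Longrightarrow> f x \<le> f a"
    using finite_max_obtain[of "Poly_Mapping.keys P" f] \<open>P \<noteq> 0\<close> by auto
  obtain b where b: "b \<in> Poly_Mapping.keys Q" "\<And>y. y \<in> Poly_Mapping.keys Q \<Longrightarrow> f y \<le> f b"
    using finite_max_obtain[of "Poly_Mapping.keys Q" f] \<open>Q \<noteq> 0\<close> by auto
  have "x = a \<and> y = b"
    if "x \<in> Poly_Mapping.keys P" "y \<in> Poly_Mapping.keys Q" "x + y = a + b" for x y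
  proof -
    have "f x + f y = f a + f b"
      using that(3) by (metis f_add)
    then show ?thesis
      using add_eq_add_le_imp_eq[OF a(2)[OF that(1)] b(2)[OF that(2)]] by (simp add: f_def)
  qed
  then have "Poly_Mapping.lookup (P * Q) (a + b) = Poly_Mapping.lookup P a * Poly_Mapping.lookup Q b"
    by (intro lookup_mult_unique_sum a(1) b(1))
  then have "a + b \<in> Poly_Mapping.keys (P * Q)"
    using a(1) b(1) by (simp add: in_keys_iff)
  moreover have "g x \<le> g a" if "x \<in> Poly_Mapping.keys P" for x
    using a(2)[OF that] by (auto simp: f_def less_eq_prod_def)
  moreover have "g y \<le> g b" if "y \<in> Poly_Mapping.keys Q" for y
    using b(2)[OF that] by (auto simp: f_def less_eq_prod_def)
  ultimately show ?thesis
    using a(1) b(1) that by blast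
qed

lemma lookup_mult_single_add:
  fixes P :: "'a::cancel_comm_monoid_add \<Rightarrow>\<^sub>0 'b::semiring_0"
  shows "Poly_Mapping.lookup (P * Poly_Mapping.single a c) (a + \<mu>) = Poly_Mapping.lookup P \<mu> * c"
  by (subst lookup_mult_finite[of "Poly_Mapping.keys P" _ "{a}"])
    (auto simp: add.commute in_keys_iff cong: if_cong)

lemma lookup_mult_single_eq_0:
  fixes P :: "'a::comm_monoid_add \<Rightarrow>\<^sub>0 'b::semiring_0"
  assumes "\<And>\<rho>. \<rho> \<in> Poly_Mapping.keys P \<Longrightarrow> a + \<rho> \<noteq> t"
  shows "Poly_Mapping.lookup (P * Poly_Mapping.single a c) t = 0"
proof -
  have "t \<notin> Poly_Mapping.keys (P * Poly_Mapping.single a c)"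
    using keys_mult[of P "Poly_Mapping.single a c"] assms by (auto simp: add.commute split: if_splits)
  then show ?thesis
    by (simp add: in_keys_iff)
qed

lemma keys_cofactor_bound:
  fixes g :: "mono \<Rightarrow> int" and F \<Theta> :: cpoly
  assumes g_add: "\<And>a b. g (a + b) = g a + g b" and "F \<noteq> 0"
    and bound: "\<And>\<tau>. \<tau> \<in> Poly_Mapping.keys (F * \<Theta>) \<Longrightarrow> \<exists>\<rho>\<in>Poly_Mapping.keys F. g \<tau> \<le> g \<rho> + K"
    and "\<theta> \<in> Poly_Mapping.keys \<Theta>"
  shows "g \<theta> \<le> K"
proof -
  have "\<Theta> \<noteq> 0"
    using assms(4) by auto
  then obtain a b where "a \<in> Poly_Mapping.keys F" "b \<in> Poly_Mapping.keys \<Theta>"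
    and a: "\<And>a'. a' \<in> Poly_Mapping.keys F \<Longrightarrow> g a' \<le> g a"
    and b: "\<And>b'. b' \<in> Poly_Mapping.keys \<Theta> \<Longrightarrow> g b' \<le> g b"
    and ab: "a + b \<in> Poly_Mapping.keys (F * \<Theta>)"
    using keys_mult_max[where g = g, OF g_add \<open>F \<noteq> 0\<close> \<open>\<Theta> \<noteq> 0\<close>] by blast
  obtain \<rho> where "\<rho> \<in> Poly_Mapping.keys F" "g (a + b) \<le> g \<rho> + K"
    using bound[OF ab] by blast
  with a have "g a + g b \<le> g a + K"
    unfolding g_add by fastforce
  then show ?thesis
    using b[OF assms(4)] by simp
qed

lemma cst_mult: "cst a * cst b = cst (a * b)"
  by (simp add: cst_def mult_single)

lemma cst_one [simp]: "cst 1 = 1"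
  by (simp add: cst_def)

lemma cst_uminus: "cst (- a) = - cst a"
  by (simp add: cst_def single_uminus)

lemma lookup_cst_mult [simp]: "Poly_Mapping.lookup (cst c * R) x = c * Poly_Mapping.lookup R x"
  by (subst lookup_mult_finite[of "{0}" _ "Poly_Mapping.keys R"]) (auto simp: cst_def in_keys_iff)

lemma lookup_pd:
  assumes "t \<le> 2"
  shows "Poly_Mapping.lookup (pd t P) \<mu> = of_nat (expo t \<mu> + 1) * Poly_Mapping.lookup P (\<mu> + unitv t)"
proof -
  have "Poly_Mapping.lookup (pd t P) \<mu> =
    (\<Sum>a\<in>Poly_Mapping.keys P. if a = \<mu> + unitv t then of_nat (expo t a) * Poly_Mapping.lookup P a else 0)"
    unfolding pd_def lookup_sum_single
  proof (intro sum.cong refl)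
    fix a
    show "(if a - unitv t = \<mu> then of_nat (expo t a) * Poly_Mapping.lookup P a else 0) =
      (if a = \<mu> + unitv t then of_nat (expo t a) * Poly_Mapping.lookup P a else 0)"
      using assms diff_unitv_eq_iff[OF assms, of a \<mu>] by (cases "expo t a = 0") auto
  qed
  also have "\<dots> = of_nat (expo t \<mu> + 1) * Poly_Mapping.lookup P (\<mu> + unitv t)"
    using assms by (simp add: in_keys_iff)
  finally show ?thesis .
qed

lemma pd_add: "t \<le> 2 \<Longrightarrow> pd t (P + Q) = pd t P + pd t Q"
  by (rule poly_mapping_eqI) (simp add: lookup_pd lookup_add algebra_simps)

lemma pd_zero [simp]: "pd t 0 = 0"
  by (simp add: pd_def)

lemma pd_sum: "t \<le> 2 \<Longrightarrow> pd t (\<Sum>x\<in>A. f x) = (\<Sum>x\<in>A. pd t (f x))"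
  by (induction A rule: infinite_finite_induct) (simp_all add: pd_add)

lemma pd_single:
  assumes "t \<le> 2"
  shows "pd t (Poly_Mapping.single a c) = Poly_Mapping.single (a - unitv t) (of_nat (expo t a) * c)"
proof (rule poly_mapping_eqI)
  fix \<mu>
  show "Poly_Mapping.lookup (pd t (Poly_Mapping.single a c)) \<mu> =
        Poly_Mapping.lookup (Poly_Mapping.single (a - unitv t) (of_nat (expo t a) * c)) \<mu>"
    using assms diff_unitv_eq_iff[OF assms, of a \<mu>]
    by (cases "expo t a = 0") (auto simp: lookup_pd lookup_single when_def)
qed

lemma pd_one: "t \<le> 2 \<Longrightarrow> pd t 1 = 0"
  using pd_single[of t 0 1] by simp

lemma pd_single_mult:
  assumes t: "t \<le> 2"
  shows "pd t (Poly_Mapping.single a c * Poly_Mapping.single b d) =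
    pd t (Poly_Mapping.single a c) * Poly_Mapping.single b d + Poly_Mapping.single a c * pd t (Poly_Mapping.single b d)"
proof -
  have left: "Poly_Mapping.single (a - unitv t + b) (of_nat (expo t a) * c * d) =
      Poly_Mapping.single (a + b - unitv t) (of_nat (expo t a) * c * d)"
    using t by (cases "expo t a = 0") (simp_all add: diff_unitv_add)
  have right: "Poly_Mapping.single (a + (b - unitv t)) (c * (of_nat (expo t b) * d)) =
      Poly_Mapping.single (a + b - unitv t) (of_nat (expo t b) * c * d)"
    using t diff_unitv_add[OF t, of b a] by (cases "expo t b = 0") (simp_all add: add.commute mult_ac)
  have "pd t (Poly_Mapping.single a c * Poly_Mapping.single b d) =
      Poly_Mapping.single (a + b - unitv t) (of_nat (expo t a) * c * d + of_nat (expo t b) * c * d)"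
    using t by (simp add: mult_single pd_single algebra_simps)
  also have "\<dots> = Poly_Mapping.single (a - unitv t + b) (of_nat (expo t a) * c * d) +
      Poly_Mapping.single (a + (b - unitv t)) (c * (of_nat (expo t b) * d))"
    by (simp add: left right single_add)
  also have "\<dots> = pd t (Poly_Mapping.single a c) * Poly_Mapping.single b d +
      Poly_Mapping.single a c * pd t (Poly_Mapping.single b d)"
    using t by (simp add: mult_single pd_single algebra_simps)
  finally show ?thesis .
qed

lemma pd_mult:
  assumes t: "t \<le> 2"
  shows "pd t (P * Q) = pd t P * Q + P * pd t Q"
proof -
  let ?s = "\<lambda>a. Poly_Mapping.single a (Poly_Mapping.lookup P a)"
  let ?r = "\<lambda>b. Poly_Mapping.single b (Poly_Mapping.lookup Q b)"
  have P: "P = (\<Sum>a\<in>Poly_Mapping.keys P. ?s a)" and Q: "Q = (\<Sum>b\<in>Poly_Mapping.keys Q. ?r b)"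
    by (rule poly_mapping_sum_single; simp)+
  have "pd t ((\<Sum>a\<in>Poly_Mapping.keys P. ?s a) * (\<Sum>b\<in>Poly_Mapping.keys Q. ?r b)) =
    pd t (\<Sum>a\<in>Poly_Mapping.keys P. ?s a) * (\<Sum>b\<in>Poly_Mapping.keys Q. ?r b) +
    (\<Sum>a\<in>Poly_Mapping.keys P. ?s a) * pd t (\<Sum>b\<in>Poly_Mapping.keys Q. ?r b)"
    using t by (simp add: sum_distrib_left sum_distrib_right pd_sum pd_single_mult sum.distrib)
  then show ?thesis
    using P Q by simp
qed

definition reweight :: "(mono \<Rightarrow> complex) \<Rightarrow> cpoly \<Rightarrow> cpoly" where
  "reweight w P = (\<Sum>a\<in>Poly_Mapping.keys P. Poly_Mapping.single a (w a * Poly_Mapping.lookup P a))"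

lemma lookup_reweight [simp]: "Poly_Mapping.lookup (reweight w P) x = w x * Poly_Mapping.lookup P x"
  unfolding reweight_def lookup_sum_single by (simp add: in_keys_iff)

lemma keys_reweight: "(\<And>a. w a \<noteq> 0) \<Longrightarrow> Poly_Mapping.keys (reweight w P) = Poly_Mapping.keys P"
  by (auto simp: in_keys_iff)

lemma reweight_add: "reweight w (P + Q) = reweight w P + reweight w Q"
  by (rule poly_mapping_eqI) (simp add: lookup_add algebra_simps)

lemma reweight_single: "reweight w (Poly_Mapping.single a c) = Poly_Mapping.single a (w a * c)"
  by (rule poly_mapping_eqI) (simp add: lookup_single when_def)

lemma reweight_mult:
  assumes w: "\<And>a b. w (a + b) = w a * w b"
  shows "reweight w (P * Q) = reweight w P * reweight w Q"
proof (rule poly_mapping_eqI)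
  fix x
  have "Poly_Mapping.lookup (reweight w P * reweight w Q) x =
    (\<Sum>a\<in>Poly_Mapping.keys P. \<Sum>b\<in>Poly_Mapping.keys Q.
       w x * (if a + b = x then Poly_Mapping.lookup P a * Poly_Mapping.lookup Q b else 0))"
    by (subst lookup_mult_finite[of "Poly_Mapping.keys P" _ "Poly_Mapping.keys Q"])
      (auto simp: in_keys_iff w[symmetric] intro!: sum.cong)
  also have "\<dots> = w x * Poly_Mapping.lookup (P * Q) x"
    by (simp add: lookup_mult_finite[of "Poly_Mapping.keys P" P "Poly_Mapping.keys Q" Q] sum_distrib_left)
  finally show "Poly_Mapping.lookup (reweight w (P * Q)) x = Poly_Mapping.lookup (reweight w P * reweight w Q) x"
    by simp
qed

lemma pd_reweight:
  assumes "\<And>a b. w (a + b) = w a * w b" and "t \<le> 2"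
  shows "pd t (reweight w P) = cst (w (unitv t)) * reweight w (pd t P)"
  by (rule poly_mapping_eqI) (simp add: lookup_pd[OF assms(2)] assms(1) algebra_simps)

lemma qhom_add: "qhom l d P \<Longrightarrow> qhom l d Q \<Longrightarrow> qhom l d (P + Q)"
  unfolding qhom_def using keys_add[of P Q] by blast

lemma qhom_diff: "qhom l d P \<Longrightarrow> qhom l d Q \<Longrightarrow> qhom l d (P - Q)"
  unfolding qhom_def using keys_diff[of P Q] by blast

lemma qhom_single: "int (wdeg l a) = d \<Longrightarrow> qhom l d (Poly_Mapping.single a c)"
  unfolding qhom_def by simp

lemma qhom_mult:
  assumes "qhom l a P" and "qhom l b Q"
  shows "qhom l (a + b) (P * Q)"
  unfolding qhom_def
proof
  fix \<mu>
  assume "\<mu> \<in> Poly_Mapping.keys (P * Q)"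
  then obtain x y where "\<mu> = x + y" "x \<in> Poly_Mapping.keys P" "y \<in> Poly_Mapping.keys Q"
    using keys_mult[of P Q] by blast
  then show "int (wdeg l \<mu>) = a + b"
    using assms by (simp add: qhom_def wdeg_add)
qed

lemma qhom_cst: "qhom l 0 (cst c)"
  unfolding qhom_def cst_def by (simp add: wdeg_def)

lemma qhom_var: "t \<le> 2 \<Longrightarrow> qhom l (expo t l) (var t)"
  unfolding qhom_def var_def by (simp add: wdeg_unitv)

lemma qhom_one: "qhom l 0 1"
  by (simp add: qhom_def wdeg_def)

lemma qhom_prod:
  assumes "\<And>r. r \<in> A \<Longrightarrow> qhom l d (f r)"
  shows "qhom l (of_nat (card A) * d) (\<Prod>r\<in>A. f r)"
  using assms
proof (induction A rule: infinite_finite_induct)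
  case (insert r A)
  then have "qhom l (d + of_nat (card A) * d) (f r * prod f A)"
    by (intro qhom_mult) simp_all
  with insert(1,2) show ?case
    by (simp add: algebra_simps)
qed (simp_all add: qhom_one)

lemma evalp_pt:
  assumes "i \<le> 2"
  shows "evalp F (pt i) =
    (\<Sum>\<mu>\<in>Poly_Mapping.keys F. if \<forall>t\<le>2. t \<noteq> i \<longrightarrow> expo t \<mu> = 0 then Poly_Mapping.lookup F \<mu> else 0)"
  unfolding evalp_def
proof (intro sum.cong refl)
  fix \<mu>
  have "i = 0 \<or> i = 1 \<or> i = 2"
    using assms by auto
  then show "Poly_Mapping.lookup F \<mu> * fst (pt i) ^ expo 0 \<mu> * fst (snd (pt i)) ^ expo 1 \<mu> * snd (snd (pt i)) ^ expo 2 \<mu> =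
    (if \<forall>t\<le>2. t \<noteq> i \<longrightarrow> expo t \<mu> = 0 then Poly_Mapping.lookup F \<mu> else 0)"
    by (auto simp: pt_def power_0_left le_Suc_eq numeral_2_eq_2)
qed

lemma wdeg_pure:
  assumes "i \<le> 2" and pure: "\<forall>t\<le>2. t \<noteq> i \<longrightarrow> expo t x = 0"
  shows "wdeg l x = expo i l * expo i x"
proof -
  have "i = 0 \<or> i = 1 \<or> i = 2"
    using assms(1) by auto
  moreover have "expo 0 x = 0" if "i \<noteq> 0" using pure that by simp
  moreover have "expo 1 x = 0" if "i \<noteq> 1" using pure that by simp
  moreover have "expo 2 x = 0" if "i \<noteq> 2" using pure that by simp
  ultimately show ?thesis
    unfolding wdeg_def by auto
qed

lemma pure_monomial_unique:
  assumes "qhom l n F" and "i \<le> 2" and "expo i l \<ge> 1"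
    and "\<mu> \<in> Poly_Mapping.keys F" "\<nu> \<in> Poly_Mapping.keys F"
    and pure: "\<forall>t\<le>2. t \<noteq> i \<longrightarrow> expo t \<mu> = 0" "\<forall>t\<le>2. t \<noteq> i \<longrightarrow> expo t \<nu> = 0"
  shows "\<nu> = \<mu>"
proof (rule mono_eqI)
  have "int (wdeg l \<nu>) = n" "int (wdeg l \<mu>) = n"
    using assms(1,4,5) by (simp_all add: qhom_def)
  then have "wdeg l \<nu> = wdeg l \<mu>"
    by simp
  then have "expo i l * expo i \<nu> = expo i l * expo i \<mu>"
    by (simp only: wdeg_pure[OF assms(2) pure(1)] wdeg_pure[OF assms(2) pure(2)])
  then have "expo i \<nu> = expo i \<mu>"
    using assms(3) by simp
  then show "expo t \<nu> = expo t \<mu>" if "t \<le> 2" for t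
    using pure that by (cases "t = i") auto
qed

lemma evalp_pt_eq_0_imp:
  assumes "qhom l n F" and "i \<le> 2" and "expo i l \<ge> 1" and "evalp F (pt i) = 0" and "\<mu> \<in> Poly_Mapping.keys F"
  shows "\<exists>t\<le>2. t \<noteq> i \<and> expo t \<mu> \<noteq> 0"
proof (rule ccontr)
  let ?pure = "\<lambda>\<nu>. \<forall>t\<le>2. t \<noteq> i \<longrightarrow> expo t \<nu> = 0"
  assume "\<not> ?thesis"
  then have pure: "?pure \<mu>"
    by blast
  have "evalp F (pt i) = (\<Sum>\<nu>\<in>Poly_Mapping.keys F. if \<nu> = \<mu> then Poly_Mapping.lookup F \<nu> else 0)"
    unfolding evalp_pt[OF assms(2)]
  proof (intro sum.cong refl)
    fix \<nu>
    assume \<nu>: "\<nu> \<in> Poly_Mapping.keys F"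
    have "?pure \<nu> \<longleftrightarrow> \<nu> = \<mu>"
    proof
      show "?pure \<nu> \<Longrightarrow> \<nu> = \<mu>"
        using pure_monomial_unique[OF assms(1-3,5) \<nu> pure] .
    qed (use pure in simp)
    then show "(if ?pure \<nu> then Poly_Mapping.lookup F \<nu> else 0) =
      (if \<nu> = \<mu> then Poly_Mapping.lookup F \<nu> else 0)"
      by simp
  qed
  also have "\<dots> = Poly_Mapping.lookup F \<mu>"
    using assms(5) by simp
  finally show False
    using assms(4,5) by (simp add: in_keys_iff)
qed

lemma nonneg_Reals_sum: "(\<And>a. a \<in> A \<Longrightarrow> f a \<in> \<real>\<^sub>\<ge>\<^sub>0) \<Longrightarrow> sum f A \<in> \<real>\<^sub>\<ge>\<^sub>0"
  by (induction A rule: infinite_finite_induct) auto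

lemma nonneg_Reals_sum_eq_0D:
  fixes f :: "'a \<Rightarrow> complex"
  assumes "finite A" and "\<And>a. a \<in> A \<Longrightarrow> f a \<in> \<real>\<^sub>\<ge>\<^sub>0" and "sum f A = 0" and "a \<in> A"
  shows "f a = 0"
proof -
  have "(\<Sum>x\<in>A. Re (f x)) = 0"
    using arg_cong[OF assms(3), of Re] by simp
  then have "Re (f a) = 0"
    using assms(1,2,4) sum_nonneg_eq_0_iff[of A "\<lambda>x. Re (f x)"] by (auto simp: complex_nonneg_Reals_iff)
  then show ?thesis
    using assms(2,4) by (simp add: complex_nonneg_Reals_iff complex_eq_iff)
qed

definition prim_root :: "nat \<Rightarrow> complex" where
  "prim_root K = cis (2 * pi / real K)"

lemma prim_root_nonzero [simp]: "prim_root K \<noteq> 0"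
  by (simp add: prim_root_def)

lemma prim_root_pow_self: "K \<ge> 1 \<Longrightarrow> prim_root K ^ K = 1"
  by (simp add: prim_root_def DeMoivre)

lemma prim_root_pow_neq_1:
  assumes "0 < s" and "s < K"
  shows "prim_root K ^ s \<noteq> 1"
proof
  let ?f = "\<lambda>k. cis (2 * pi * real k / real K)"
  assume "prim_root K ^ s = 1"
  then have eq: "?f s = ?f 0"
    by (simp add: prim_root_def DeMoivre mult_ac)
  have inj: "inj_on ?f {..<K}"
    using bij_betw_roots_unity[of K] assms by (simp add: bij_betw_def)
  have "s = 0"
    using inj_onD[OF inj eq] assms by simp
  with assms show False
    by simp
qed

lemma sum_powers_root_of_unity:
  fixes z :: complex
  assumes "z ^ K = 1" and "z \<noteq> 1"
  shows "(\<Sum>r<K. z ^ r) = 0"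
  using assms by (simp add: geometric_sum)

section \<open>The witness foliation\<close>

text \<open>The hypotheses on \<open>\<alpha>, \<beta>, c1, c2, c3\<close> make \<open>X\<^sub>j = x\<^bsup>b1\<^esup> + x\<^sub>j x\<^bsup>kap\<^esup>\<close>
  and \<open>X\<^sub>k = x\<^bsup>b2\<^esup> + N x\<^sub>k x\<^bsup>kap\<^esup>\<close> quasi-homogeneous of degrees \<open>e + l\<^sub>j\<close> and
  \<open>e + l\<^sub>k\<close>, so that the foliation has degree \<open>e + l\<^sub>i + l\<^sub>j + l\<^sub>k\<close>.\<close>

locale witness_foliation =
  fixes l :: "nat \<times> nat \<times> nat" and i j k e \<alpha> \<beta> c1 c2 c3 N :: nat
  assumes indices: "i \<le> 2" "j \<le> 2" "k \<le> 2" "i \<noteq> j" "i \<noteq> k" "j < k"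
    and weights_pos: "expo i l \<ge> 1" "expo j l \<ge> 1" "expo k l \<ge> 1"
    and alpha_less: "\<alpha> < expo i l"
    and b1_deg: "expo k l * \<beta> + expo i l * c1 = e + expo j l"
    and b2_deg: "expo j l * \<alpha> + expo i l * c2 = e + expo k l"
    and kap_deg: "expo j l * (expo i l - 1) + expo k l * \<beta> + expo i l * c3 = e"
    and coprime_weights: "coprime (expo j l) (expo i l)"
begin

abbreviation "m \<equiv> expo i l"
abbreviation "wj \<equiv> expo j l"
abbreviation "wk \<equiv> expo k l"

lemma indices_cases: "(i = 0 \<and> j = 1 \<and> k = 2) \<or> (i = 1 \<and> j = 0 \<and> k = 2) \<or> (i = 2 \<and> j = 0 \<and> k = 1)"
  using indices by linarith

lemma index_cases: "t \<le> 2 \<Longrightarrow> t = i \<or> t = j \<or> t = k"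
  using indices_cases by linarith

lemma wdeg_eq: "wdeg l \<mu> = m * expo i \<mu> + wj * expo j \<mu> + wk * expo k \<mu>"
  using indices_cases by (auto simp: wdeg_def)

lemma sum_indices: "(\<Sum>t\<le>2. f t) = f i + f j + (f k :: 'a::comm_monoid_add)"
proof -
  have "(\<Sum>t\<le>2. f t) = f 0 + f 1 + f 2"
    by (simp add: numeral_2_eq_2 add_ac)
  then show ?thesis
    using indices_cases by (auto simp: add_ac)
qed

lemma expo_unitv_indices [simp]:
  "expo i (unitv i) = 1" "expo j (unitv i) = 0" "expo k (unitv i) = 0"
  "expo i (unitv j) = 0" "expo j (unitv j) = 1" "expo k (unitv j) = 0"
  "expo i (unitv k) = 0" "expo j (unitv k) = 0" "expo k (unitv k) = 1"
  using indices by simp_all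

lemma mono_eq_indicesI:
  "expo i a = expo i b \<Longrightarrow> expo j a = expo j b \<Longrightarrow> expo k a = expo k b \<Longrightarrow> a = b"
  by (rule mono_eqI) (use index_cases in blast)

definition "b1 = mono_of (\<lambda>t. if t = j then 0 else if t = k then \<beta> else c1)"
definition "b2 = mono_of (\<lambda>t. if t = j then \<alpha> else if t = k then 0 else c2)"
definition "kap = mono_of (\<lambda>t. if t = j then m - 1 else if t = k then \<beta> else c3)"
definition "kap' = kap + unitv i"

lemma expo_b1 [simp]: "expo i b1 = c1" "expo j b1 = 0" "expo k b1 = \<beta>"
  using indices by (simp_all add: b1_def)

lemma expo_b2 [simp]: "expo i b2 = c2" "expo j b2 = \<alpha>" "expo k b2 = 0"
  using indices by (simp_all add: b2_def)

lemma expo_kap [simp]: "expo i kap = c3" "expo j kap = m - 1" "expo k kap = \<beta>"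
  using indices by (simp_all add: kap_def)

lemma expo_kap' [simp]: "expo i kap' = c3 + 1" "expo j kap' = m - 1" "expo k kap' = \<beta>"
  using indices by (simp_all add: kap'_def)

lemma wdeg_b1: "wdeg l b1 = e + wj"
  using b1_deg by (simp add: wdeg_eq algebra_simps)

lemma wdeg_b2: "wdeg l b2 = e + wk"
  using b2_deg by (simp add: wdeg_eq algebra_simps)

lemma wdeg_kap: "wdeg l kap = e"
  using kap_deg by (simp add: wdeg_eq algebra_simps)

definition "Xj = Poly_Mapping.single b1 1 + Poly_Mapping.single (kap + unitv j) (1::complex)"
definition "Xk = Poly_Mapping.single b2 1 + Poly_Mapping.single (kap + unitv k) (of_nat N :: complex)"
definition "X P = Xj * pd j P + Xk * pd k P"

lemma qhom_Xj: "qhom l (e + wj) Xj"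
  unfolding Xj_def using indices
  by (intro qhom_add qhom_single) (simp_all add: wdeg_b1 wdeg_add wdeg_kap wdeg_unitv)

lemma qhom_Xk: "qhom l (e + wk) Xk"
  unfolding Xk_def using indices
  by (intro qhom_add qhom_single) (simp_all add: wdeg_b2 wdeg_add wdeg_kap wdeg_unitv)

lemma X_mult: "X (P * Q) = X P * Q + P * X Q"
  unfolding X_def using indices by (simp add: pd_mult algebra_simps)

lemma X_one: "X 1 = 0"
  using indices by (simp add: X_def pd_one)

text \<open>Up to sign, \<open>\<omega>\<close> is \<open>\<iota>\<^sub>R \<iota>\<^sub>X (dx\<^sub>0 \<and> dx\<^sub>1 \<and> dx\<^sub>2)\<close>; the \<open>dx\<^sub>j \<and> dx\<^sub>k\<close>
  coefficient of \<open>\<omega> \<and> dF\<close> is \<open>- l\<^sub>i x\<^sub>i X(F)\<close>.\<close>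

definition "omega_coeff t = (if t = i then cst (of_nat wj) * var j * Xk - cst (of_nat wk) * var k * Xj
  else if t = j then cst (- of_nat m) * var i * Xk else cst (of_nat m) * var i * Xj)"

definition "\<omega> = (omega_coeff 0, omega_coeff 1, omega_coeff 2)"

abbreviation "deg \<equiv> e + m + wj + wk"

lemma comp_omega: "t \<le> 2 \<Longrightarrow> comp t \<omega> = omega_coeff t"
  by (auto simp: comp_def \<omega>_def le_Suc_eq numeral_2_eq_2)

lemma qhom_omega_coeff: "t \<le> 2 \<Longrightarrow> qhom l (int deg - int (expo t l)) (omega_coeff t)"
proof -
  assume t: "t \<le> 2"
  have coeff_i: "qhom l (int deg - int m) (omega_coeff i)"
  proof -
    have "qhom l (wj + (e + wk)) (cst (of_nat wj) * var j * Xk)"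
      using qhom_mult[OF qhom_mult[OF qhom_cst qhom_var[OF indices(2)]] qhom_Xk] by simp
    moreover have "qhom l (wk + (e + wj)) (cst (of_nat wk) * var k * Xj)"
      using qhom_mult[OF qhom_mult[OF qhom_cst qhom_var[OF indices(3)]] qhom_Xj] by simp
    ultimately show ?thesis
      by (auto simp: omega_coeff_def add_ac intro: qhom_diff)
  qed
  have coeff_j: "qhom l (int deg - int wj) (omega_coeff j)"
    using qhom_mult[OF qhom_mult[OF qhom_cst qhom_var[OF indices(1)]] qhom_Xk] indices
    by (simp add: omega_coeff_def add_ac)
  have coeff_k: "qhom l (int deg - int wk) (omega_coeff k)"
    using qhom_mult[OF qhom_mult[OF qhom_cst qhom_var[OF indices(1)]] qhom_Xj] indices
    by (simp add: omega_coeff_def add_ac)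
  from index_cases[OF t] coeff_i coeff_j coeff_k show ?thesis
    by auto
qed

lemma omega_coeff_j_nonzero: "omega_coeff j \<noteq> 0"
proof -
  have "omega_coeff j = Poly_Mapping.single (unitv i + b2) (- of_nat m) +
      Poly_Mapping.single (unitv i + (kap + unitv k)) (- of_nat m * of_nat N)"
    using indices by (simp add: omega_coeff_def Xk_def cst_def var_def mult_single distrib_left)
  moreover have "unitv i + b2 \<noteq> unitv i + (kap + unitv k)"
    by (auto dest: arg_cong[where f = "expo k"])
  ultimately have "Poly_Mapping.lookup (omega_coeff j) (unitv i + b2) = - of_nat m"
    by (simp add: lookup_add lookup_single)
  then show ?thesis
    using weights_pos(1) by auto
qed

lemma fol_form_omega: "fol_form l deg \<omega>"
  unfolding fol_form_def
proof (intro conjI allI impI)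
  show "\<omega> \<noteq> (0, 0, 0)"
  proof
    assume "\<omega> = (0, 0, 0)"
    then have "comp j \<omega> = 0"
      by (simp add: comp_def)
    with omega_coeff_j_nonzero show False
      by (simp add: comp_omega indices)
  qed
  show "qhom l (int deg - int (expo t l)) (comp t \<omega>)" if "t \<le> 2" for t
    unfolding comp_omega[OF that] by (rule qhom_omega_coeff[OF that])
  have "(\<Sum>t\<le>2. cst (of_nat (expo t l)) * var t * comp t \<omega>) =
      cst (of_nat m) * var i * omega_coeff i + cst (of_nat wj) * var j * omega_coeff j + cst (of_nat wk) * var k * omega_coeff k"
    by (simp add: comp_omega sum_indices indices cong: sum.cong)
  also have "\<dots> = 0"
    using indices by (simp add: omega_coeff_def cst_uminus algebra_simps)
  finally show "(\<Sum>t\<le>2. cst (of_nat (expo t l)) * var t * comp t \<omega>) = 0" .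
qed

definition "shift_j \<rho> = b1 + unitv i + (\<rho> - unitv j)"
definition "shift_k \<rho> = b2 + unitv i + (\<rho> - unitv k)"

text \<open>Besides the diagonal term \<open>diag_coeff \<rho> x\<^bsup>kap' + \<rho>\<^esup>\<close>, \<open>x\<^sub>i X(x\<^bsup>\<rho>\<^esup>)\<close> contains
  \<open>x\<^bsup>t\<^esup>\<close> with multiplicity \<open>inflow t \<rho>\<close>.\<close>

definition "diag_coeff \<rho> = expo j \<rho> + N * expo k \<rho>"
definition "inflow t \<rho> = (if shift_j \<rho> = t then expo j \<rho> else 0) + (if shift_k \<rho> = t then expo k \<rho> else 0)"

lemma single_add_diff_unitv:
  assumes "t \<le> 2"
  shows "Poly_Mapping.single (x + unitv t + (\<rho> - unitv t)) (of_nat (expo t \<rho>) * c) =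
    Poly_Mapping.single (x + \<rho>) (of_nat (expo t \<rho>) * (c::complex))"
proof (cases "expo t \<rho> = 0")
  case False
  then have "x + unitv t + (\<rho> - unitv t) = x + \<rho>"
    using assms by (intro mono_eqI) simp
  then show ?thesis
    by simp
qed simp

lemma xi_X_expansion:
  "var i * X P = (\<Sum>\<rho>\<in>Poly_Mapping.keys P.
     Poly_Mapping.single (shift_j \<rho>) (of_nat (expo j \<rho>) * Poly_Mapping.lookup P \<rho>) +
     Poly_Mapping.single (shift_k \<rho>) (of_nat (expo k \<rho>) * Poly_Mapping.lookup P \<rho>) +
     Poly_Mapping.single (kap' + \<rho>) (of_nat (diag_coeff \<rho>) * Poly_Mapping.lookup P \<rho>))"
proof -
  have xj: "var i * Xj = Poly_Mapping.single (b1 + unitv i) 1 + Poly_Mapping.single (kap' + unitv j) 1"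
    by (simp add: var_def Xj_def mult_single distrib_left kap'_def add_ac)
  have xk: "var i * Xk = Poly_Mapping.single (b2 + unitv i) 1 + Poly_Mapping.single (kap' + unitv k) (of_nat N)"
    by (simp add: var_def Xk_def mult_single distrib_left kap'_def add_ac)
  have "var i * X P = (var i * Xj) * pd j P + (var i * Xk) * pd k P"
    by (simp add: X_def algebra_simps)
  also have "\<dots> = (\<Sum>\<rho>\<in>Poly_Mapping.keys P.
     Poly_Mapping.single (b1 + unitv i + (\<rho> - unitv j)) (of_nat (expo j \<rho>) * Poly_Mapping.lookup P \<rho>) +
     Poly_Mapping.single (kap' + unitv j + (\<rho> - unitv j)) (of_nat (expo j \<rho>) * Poly_Mapping.lookup P \<rho>) +
     (Poly_Mapping.single (b2 + unitv i + (\<rho> - unitv k)) (of_nat (expo k \<rho>) * Poly_Mapping.lookup P \<rho>) +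
     Poly_Mapping.single (kap' + unitv k + (\<rho> - unitv k)) (of_nat (expo k \<rho>) * (of_nat N * Poly_Mapping.lookup P \<rho>))))"
    unfolding xj xk pd_def
    by (simp add: distrib_left distrib_right sum_distrib_left sum_distrib_right mult_single sum.distrib
        mult_ac add_ac)
  also have "\<dots> = (\<Sum>\<rho>\<in>Poly_Mapping.keys P.
     Poly_Mapping.single (shift_j \<rho>) (of_nat (expo j \<rho>) * Poly_Mapping.lookup P \<rho>) +
     Poly_Mapping.single (shift_k \<rho>) (of_nat (expo k \<rho>) * Poly_Mapping.lookup P \<rho>) +
     Poly_Mapping.single (kap' + \<rho>) (of_nat (diag_coeff \<rho>) * Poly_Mapping.lookup P \<rho>))"
    unfolding shift_j_def shift_k_def diag_coeff_def
      single_add_diff_unitv[OF indices(2)] single_add_diff_unitv[OF indices(3)]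
    by (simp add: single_add algebra_simps)
  finally show ?thesis .
qed

lemma lookup_xi_X:
  "Poly_Mapping.lookup (var i * X P) t = (\<Sum>\<rho>\<in>Poly_Mapping.keys P.
     (of_nat (inflow t \<rho>) + (if kap' + \<rho> = t then of_nat (diag_coeff \<rho>) else 0)) * Poly_Mapping.lookup P \<rho>)"
  unfolding xi_X_expansion lookup_sum
  by (intro sum.cong refl) (simp add: lookup_add lookup_single when_def inflow_def distrib_right)

lemma inflow_pos_cases:
  assumes "inflow t \<rho> \<noteq> 0"
  shows "(shift_j \<rho> = t \<and> expo j \<rho> \<ge> 1) \<or> (shift_k \<rho> = t \<and> expo k \<rho> \<ge> 1)"
  using assms by (auto simp: inflow_def split: if_splits)

lemma keys_xi_X:
  assumes "\<tau> \<in> Poly_Mapping.keys (var i * X P)"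
  obtains \<rho> where "\<rho> \<in> Poly_Mapping.keys P"
    "(\<tau> = shift_j \<rho> \<and> expo j \<rho> \<ge> 1) \<or> (\<tau> = shift_k \<rho> \<and> expo k \<rho> \<ge> 1) \<or> \<tau> = kap' + \<rho>"
proof -
  have "\<exists>\<rho>\<in>Poly_Mapping.keys P. inflow \<tau> \<rho> \<noteq> 0 \<or> kap' + \<rho> = \<tau>"
  proof (rule ccontr)
    assume "\<not> ?thesis"
    then have "Poly_Mapping.lookup (var i * X P) \<tau> = 0"
      unfolding lookup_xi_X by (intro sum.neutral) auto
    with assms show False
      by (simp add: in_keys_iff)
  qed
  then show ?thesis
    using that inflow_pos_cases by metis
qed

lemma expo_shift_j:
  "expo i (shift_j \<rho>) = c1 + 1 + expo i \<rho>" "expo j (shift_j \<rho>) = expo j \<rho> - 1" "expo k (shift_j \<rho>) = \<beta> + expo k \<rho>"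
  by (simp_all add: shift_j_def)

lemma expo_shift_k:
  "expo i (shift_k \<rho>) = c2 + 1 + expo i \<rho>" "expo j (shift_k \<rho>) = \<alpha> + expo j \<rho>" "expo k (shift_k \<rho>) = expo k \<rho> - 1"
  by (simp_all add: shift_k_def)

lemma wdeg_shift_j:
  assumes "expo j \<rho> \<ge> 1"
  shows "wdeg l (shift_j \<rho>) = wdeg l \<rho> + e + m"
proof -
  obtain r where r: "expo j \<rho> = Suc r"
    using assms by (cases "expo j \<rho>") auto
  have "wdeg l (shift_j \<rho>) = (wk * \<beta> + m * c1) + m + m * expo i \<rho> + wj * r + wk * expo k \<rho>"
    by (simp add: wdeg_eq expo_shift_j r algebra_simps)
  then show ?thesis
    unfolding b1_deg by (simp add: wdeg_eq r algebra_simps)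
qed

lemma wdeg_shift_k:
  assumes "expo k \<rho> \<ge> 1"
  shows "wdeg l (shift_k \<rho>) = wdeg l \<rho> + e + m"
proof -
  obtain r where r: "expo k \<rho> = Suc r"
    using assms by (cases "expo k \<rho>") auto
  have "wdeg l (shift_k \<rho>) = (wj * \<alpha> + m * c2) + m + m * expo i \<rho> + wj * expo j \<rho> + wk * r"
    by (simp add: wdeg_eq expo_shift_k r algebra_simps)
  then show ?thesis
    unfolding b2_deg by (simp add: wdeg_eq r algebra_simps)
qed

lemma wdeg_kap': "wdeg l kap' = e + m"
  using wdeg_kap by (simp add: wdeg_add kap'_def wdeg_unitv indices)

definition "has_cofactor P A \<longleftrightarrow> var i * X P = P * A"

lemma has_cofactor_mult: "has_cofactor P A \<Longrightarrow> has_cofactor Q B \<Longrightarrow> has_cofactor (P * Q) (A + B)"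
  unfolding has_cofactor_def by (simp add: X_mult algebra_simps)

lemma has_cofactor_one: "has_cofactor 1 0"
  by (simp add: has_cofactor_def X_one)

lemma comp_scale_form: "comp t (scale_form c \<omega>') = cst c * comp t \<omega>'"
  by (simp add: comp_def scale_form_def)

lemma invariant_imp_has_cofactor:
  assumes "c \<noteq> 0" and "invariant (scale_form c \<omega>) F"
  obtains \<Theta> where "has_cofactor F \<Theta>"
proof -
  obtain \<Theta> where "comp j (scale_form c \<omega>) * pd k F - comp k (scale_form c \<omega>) * pd j F = F * \<Theta>"
    using assms(2) indices unfolding invariant_def by blast
  moreover have "comp j (scale_form c \<omega>) = cst c * omega_coeff j" "comp k (scale_form c \<omega>) = cst c * omega_coeff k"
    using indices by (simp_all add: comp_scale_form comp_omega)
  moreover have "cst c * omega_coeff j * pd k F - cst c * omega_coeff k * pd j F = cst (- (c * of_nat m)) * (var i * X F)"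
    using indices by (simp add: omega_coeff_def X_def cst_uminus cst_mult[symmetric] algebra_simps)
  ultimately have eq: "cst (- (c * of_nat m)) * (var i * X F) = F * \<Theta>"
    by simp
  have "c * of_nat m \<noteq> 0"
    using assms(1) weights_pos(1) by simp
  then have "var i * X F = cst (- (1 / (c * of_nat m))) * (cst (- (c * of_nat m)) * (var i * X F))"
    by (simp add: mult.assoc[symmetric] cst_mult)
  also have "\<dots> = F * (cst (- (1 / (c * of_nat m))) * \<Theta>)"
    using eq by (simp add: algebra_simps)
  finally have "has_cofactor F (cst (- (1 / (c * of_nat m))) * \<Theta>)"
    unfolding has_cofactor_def .
  then show ?thesis
    by (rule that)
qed

lemma cofactor_keys:
  assumes cof: "has_cofactor F \<Theta>" and "F \<noteq> 0" and hom: "qhom l (int n) F"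
    and \<theta>: "\<theta> \<in> Poly_Mapping.keys \<Theta>"
  shows "wdeg l \<theta> = e + m" "expo k \<theta> \<le> \<beta>" "expo j \<theta> \<le> m - 1"
proof -
  have keys_F\<Theta>: "Poly_Mapping.keys (F * \<Theta>) = Poly_Mapping.keys (var i * X F)"
    using cof by (simp add: has_cofactor_def)
  have F_deg: "wdeg l \<rho> = n" if "\<rho> \<in> Poly_Mapping.keys F" for \<rho>
    using hom that by (simp add: qhom_def)
  have bound: "g \<theta> \<le> K"
    if "\<And>a b. g (a + b) = g a + g b"
      and "\<And>\<rho> \<tau>. \<rho> \<in> Poly_Mapping.keys F \<Longrightarrow>
             (\<tau> = shift_j \<rho> \<and> expo j \<rho> \<ge> 1) \<or> (\<tau> = shift_k \<rho> \<and> expo k \<rho> \<ge> 1) \<or> \<tau> = kap' + \<rho> \<Longrightarrow>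
             g \<tau> \<le> g \<rho> + K"
    for g :: "mono \<Rightarrow> int" and K
  proof (rule keys_cofactor_bound[where g = g, OF that(1) \<open>F \<noteq> 0\<close> _ \<theta>])
    fix \<tau>
    assume "\<tau> \<in> Poly_Mapping.keys (F * \<Theta>)"
    then obtain \<rho> where "\<rho> \<in> Poly_Mapping.keys F"
      "(\<tau> = shift_j \<rho> \<and> expo j \<rho> \<ge> 1) \<or> (\<tau> = shift_k \<rho> \<and> expo k \<rho> \<ge> 1) \<or> \<tau> = kap' + \<rho>"
      unfolding keys_F\<Theta> by (rule keys_xi_X)
    with that(2) show "\<exists>\<rho>\<in>Poly_Mapping.keys F. g \<tau> \<le> g \<rho> + K"
      by blast
  qed
  have "int (wdeg l \<theta>) \<le> int (e + m)"
    by (rule bound) (auto simp: wdeg_add wdeg_shift_j wdeg_shift_k wdeg_kap')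
  moreover have "- int (wdeg l \<theta>) \<le> - int (e + m)"
    by (rule bound) (auto simp: wdeg_add wdeg_shift_j wdeg_shift_k wdeg_kap' F_deg)
  ultimately show "wdeg l \<theta> = e + m"
    by simp
  have "int (expo k \<theta>) \<le> int \<beta>"
    by (rule bound) (auto simp: expo_shift_j expo_shift_k)
  then show "expo k \<theta> \<le> \<beta>"
    by simp
  have "int (expo j \<theta>) \<le> int (m - 1)"
    by (rule bound) (use alpha_less in \<open>auto simp: expo_shift_j expo_shift_k\<close>)
  then show "expo j \<theta> \<le> m - 1"
    by simp
qed

text \<open>Among the exponents allowed by \<open>cofactor_keys\<close>, coprimality of \<open>l\<^sub>i\<close> and \<open>l\<^sub>j\<close> singles out
  \<open>kap'\<close> as the only one of maximal \<open>x\<^sub>k\<close>-degree.\<close>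

lemma cofactor_key_eq_kap':
  assumes "expo k \<theta> = \<beta>" and "wdeg l \<theta> = e + m" and "expo j \<theta> \<le> m - 1"
  shows "\<theta> = kap'"
proof -
  obtain m1 where m1: "m = Suc m1"
    using weights_pos(1) by (cases m) auto
  have "m * expo i \<theta> + wj * expo j \<theta> = wj * m1 + m * (c3 + 1)"
    using assms(1,2) kap_deg m1 unfolding wdeg_eq by (simp add: algebra_simps)
  then have "int m * (int (expo i \<theta>) - int c3 - 1) = int wj * (int m1 - int (expo j \<theta>))"
    by (simp add: algebra_simps flip: of_nat_mult of_nat_add)
  then have "int m dvd int wj * (int m1 - int (expo j \<theta>))"
    by (metis dvd_triv_left)
  moreover have "coprime (int m) (int wj)"
    using coprime_weights by (simp add: coprime_commute)
  ultimately have "int m dvd int m1 - int (expo j \<theta>)"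
    using coprime_dvd_mult_right_iff by blast
  moreover have "0 \<le> int m1 - int (expo j \<theta>)" "int m1 - int (expo j \<theta>) < int m"
    using assms(3) m1 by auto
  ultimately have j: "expo j \<theta> = m - 1"
    using zdvd_imp_le m1 by (cases "int m1 - int (expo j \<theta>) = 0") fastforce+
  then have "m * expo i \<theta> = m * Suc c3"
    using assms(1,2) kap_deg unfolding wdeg_eq by (simp add: algebra_simps)
  then have "expo i \<theta> = c3 + 1"
    using weights_pos(1) mult_left_cancel[of m "expo i \<theta>" "Suc c3"] by simp
  with j assms(1) show ?thesis
    by (intro mono_eq_indicesI) simp_all
qed

abbreviation "\<zeta> \<equiv> prim_root (\<beta> + 1)"

definition "rot r \<mu> = \<zeta> ^ (r * expo k \<mu>)"

lemma zeta_pow_order: "\<zeta> ^ (\<beta> + 1) = 1"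
  by (rule prim_root_pow_self) simp

lemma rot_add: "rot r (a + b) = rot r a * rot r b"
  by (simp add: rot_def algebra_simps power_add)

lemma reweight_rot_mult: "reweight (rot r) (P * Q) = reweight (rot r) P * reweight (rot r) Q"
  by (rule reweight_mult) (rule rot_add)

lemma pd_reweight_rot:
  "pd j (reweight (rot r) P) = reweight (rot r) (pd j P)"
  "pd k (reweight (rot r) P) = cst (\<zeta> ^ r) * reweight (rot r) (pd k P)"
  using pd_reweight[of "rot r", OF rot_add] indices by (simp_all add: rot_def)

lemma reweight_rot_var: "reweight (rot r) (var i) = var i"
  by (simp add: var_def reweight_single rot_def)

lemma reweight_rot_Xj: "reweight (rot r) Xj = cst (\<zeta> ^ (r * \<beta>)) * Xj"
  by (simp add: Xj_def reweight_add reweight_single rot_def cst_def mult_single distrib_left)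

lemma reweight_rot_Xk: "reweight (rot r) Xk = Xk"
proof -
  have "\<zeta> ^ (r * (\<beta> + 1)) = 1"
    by (metis zeta_pow_order mult.commute power_mult power_one)
  then show ?thesis
    by (simp add: Xk_def reweight_add reweight_single rot_def)
qed

lemma X_reweight_rot: "X (reweight (rot r) P) = cst (\<zeta> ^ r) * reweight (rot r) (X P)"
proof -
  have unit: "\<zeta> ^ r * \<zeta> ^ (r * \<beta>) = 1"
    by (metis zeta_pow_order mult.commute power_add power_mult power_one mult_Suc_right Suc_eq_plus1)
  have "cst (\<zeta> ^ r) * reweight (rot r) (X P) =
      cst (\<zeta> ^ r) * (reweight (rot r) Xj * reweight (rot r) (pd j P) + reweight (rot r) Xk * reweight (rot r) (pd k P))"
    by (simp add: X_def reweight_add reweight_rot_mult)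
  also have "\<dots> = cst (\<zeta> ^ r * \<zeta> ^ (r * \<beta>)) * Xj * reweight (rot r) (pd j P) +
      cst (\<zeta> ^ r) * Xk * reweight (rot r) (pd k P)"
    by (simp add: reweight_rot_Xj reweight_rot_Xk algebra_simps cst_mult[symmetric])
  also have "\<dots> = Xj * reweight (rot r) (pd j P) + cst (\<zeta> ^ r) * Xk * reweight (rot r) (pd k P)"
    by (simp only: unit cst_one mult_1_left)
  also have "\<dots> = X (reweight (rot r) P)"
    by (simp add: X_def pd_reweight_rot algebra_simps)
  finally show ?thesis
    by simp
qed

lemma has_cofactor_reweight_rot:
  assumes "has_cofactor P A"
  shows "has_cofactor (reweight (rot r) P) (cst (\<zeta> ^ r) * reweight (rot r) A)"
proof -
  have "var i * X (reweight (rot r) P) = cst (\<zeta> ^ r) * reweight (rot r) (var i * X P)"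
    by (simp add: X_reweight_rot reweight_rot_mult reweight_rot_var algebra_simps)
  also have "\<dots> = reweight (rot r) P * (cst (\<zeta> ^ r) * reweight (rot r) A)"
    using assms by (simp add: has_cofactor_def reweight_rot_mult algebra_simps)
  finally show ?thesis
    by (simp add: has_cofactor_def)
qed

lemma has_cofactor_orbit_prod:
  assumes "has_cofactor F \<Theta>"
  shows "has_cofactor (\<Prod>r<K. reweight (rot r) F) (\<Sum>r<K. cst (\<zeta> ^ r) * reweight (rot r) \<Theta>)"
proof (induction K)
  case 0
  then show ?case
    by (simp add: has_cofactor_one)
next
  case (Suc K)
  then show ?case
    using has_cofactor_mult[OF Suc has_cofactor_reweight_rot[OF assms]] by simp
qed

text \<open>The averaged cofactor keeps only the monomials whose \<open>x\<^sub>k\<close>-degree is \<open>\<beta>\<close> modulo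
  \<open>\<beta> + 1\<close>; by \<open>cofactor_keys\<close> and \<open>cofactor_key_eq_kap'\<close> this leaves \<open>x\<^bsup>kap'\<^esup>\<close> alone.\<close>

lemma orbit_cofactor_monomial:
  assumes cof: "has_cofactor F \<Theta>" and "F \<noteq> 0" and hom: "qhom l (int n) F"
  shows "(\<Sum>r<\<beta>+1. cst (\<zeta> ^ r) * reweight (rot r) \<Theta>) =
    Poly_Mapping.single kap' (of_nat (\<beta> + 1) * Poly_Mapping.lookup \<Theta> kap')"
proof (rule poly_mapping_eqI)
  fix \<mu>
  have lookup_avg: "Poly_Mapping.lookup (\<Sum>r<\<beta>+1. cst (\<zeta> ^ r) * reweight (rot r) \<Theta>) \<mu> =
      Poly_Mapping.lookup \<Theta> \<mu> * (\<Sum>r<\<beta>+1. (\<zeta> ^ (expo k \<mu> + 1)) ^ r)"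
    unfolding lookup_sum lookup_cst_mult lookup_reweight rot_def sum_distrib_left
    by (intro sum.cong refl) (simp add: power_add power_mult[symmetric] algebra_simps)
  show "Poly_Mapping.lookup (\<Sum>r<\<beta>+1. cst (\<zeta> ^ r) * reweight (rot r) \<Theta>) \<mu> =
      Poly_Mapping.lookup (Poly_Mapping.single kap' (of_nat (\<beta> + 1) * Poly_Mapping.lookup \<Theta> kap')) \<mu>"
  proof (cases "\<mu> \<in> Poly_Mapping.keys \<Theta>")
    case False
    then show ?thesis
      unfolding lookup_avg by (auto simp: lookup_single when_def in_keys_iff)
  next
    case True
    note \<mu> = cofactor_keys[OF cof \<open>F \<noteq> 0\<close> hom True]
    show ?thesis
    proof (cases "expo k \<mu> = \<beta>")
      case True
      then have "\<mu> = kap'"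
        using cofactor_key_eq_kap' \<mu> by blast
      then show ?thesis
        unfolding lookup_avg using True zeta_pow_order by (simp add: lookup_single)
    next
      case False
      have "\<zeta> ^ (expo k \<mu> + 1) \<noteq> 1"
        using False \<mu>(2) by (intro prim_root_pow_neq_1) simp_all
      moreover have "(\<zeta> ^ (expo k \<mu> + 1)) ^ (\<beta> + 1) = 1"
        by (metis zeta_pow_order power_mult mult.commute power_one)
      ultimately have "(\<Sum>r<\<beta>+1. (\<zeta> ^ (expo k \<mu> + 1)) ^ r) = 0"
        by (intro sum_powers_root_of_unity)
      moreover have "\<mu> \<noteq> kap'"
        using False by auto
      ultimately show ?thesis
        unfolding lookup_avg by (simp add: lookup_single when_def)
    qed
  qed
qed

lemma diag_coeff_less_shift_j:
  assumes "expo j \<rho> \<ge> 1" and "shift_j \<rho> = kap' + \<mu>"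
  shows "diag_coeff \<mu> < diag_coeff \<rho>"
proof -
  have "expo j (shift_j \<rho>) = expo j (kap' + \<mu>)" "expo k (shift_j \<rho>) = expo k (kap' + \<mu>)"
    using assms(2) by simp_all
  then have "expo j \<rho> = expo j \<mu> + m" "expo k \<rho> = expo k \<mu>"
    using assms(1) weights_pos(1) by (simp_all add: expo_shift_j)
  then show ?thesis
    using weights_pos(1) by (simp add: diag_coeff_def)
qed

lemma diag_coeff_less_shift_k:
  assumes "expo k \<rho> \<ge> 1" and "shift_k \<rho> = kap' + \<mu>" and "expo j \<mu> < N"
  shows "diag_coeff \<mu> < diag_coeff \<rho>"
proof -
  have "expo k (shift_k \<rho>) = expo k (kap' + \<mu>)"
    using assms(2) by simp
  then have "expo k \<rho> = expo k \<mu> + \<beta> + 1"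
    using assms(1) by (simp add: expo_shift_k)
  then have "N * (expo k \<mu> + 1) \<le> N * expo k \<rho>"
    by simp
  moreover have "diag_coeff \<mu> < N * (expo k \<mu> + 1)"
    using assms(3) by (simp add: diag_coeff_def algebra_simps)
  ultimately show ?thesis
    by (simp add: diag_coeff_def)
qed

lemma diag_coeff_less_kap'_shift_j:
  assumes "expo j \<mu> \<ge> 1" and "kap' + \<rho> = shift_j \<mu>"
  shows "diag_coeff \<rho> < diag_coeff \<mu>"
proof -
  have "expo j (kap' + \<rho>) = expo j (shift_j \<mu>)" "expo k (kap' + \<rho>) = expo k (shift_j \<mu>)"
    using assms(2) by simp_all
  then have "expo j \<rho> + m = expo j \<mu>" "expo k \<rho> = expo k \<mu>"
    using assms(1) weights_pos(1) by (simp_all add: expo_shift_j)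
  then show ?thesis
    using weights_pos(1) by (simp add: diag_coeff_def)
qed

lemma diag_coeff_less_kap'_shift_k:
  assumes "expo k \<mu> \<ge> 1" and "kap' + \<rho> = shift_k \<mu>" and "N \<ge> 1"
  shows "diag_coeff \<rho> < diag_coeff \<mu>"
proof -
  have "expo j (kap' + \<rho>) = expo j (shift_k \<mu>)" "expo k (kap' + \<rho>) = expo k (shift_k \<mu>)"
    using assms(2) by simp_all
  then have "expo j \<rho> + (m - 1) = \<alpha> + expo j \<mu>" "expo k \<rho> + \<beta> + 1 = expo k \<mu>"
    using assms(1) by (simp_all add: expo_shift_k)
  then have "expo j \<rho> \<le> expo j \<mu>" "expo k \<rho> + 1 \<le> expo k \<mu>"
    using alpha_less by simp_all
  moreover have "N * (expo k \<rho> + 1) \<le> N * expo k \<mu>"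
    using \<open>expo k \<rho> + 1 \<le> expo k \<mu>\<close> by (rule mult_le_mono2)
  ultimately show ?thesis
    using assms(3) by (simp add: diag_coeff_def)
qed

lemma inflow_diag_coeff_less:
  assumes "inflow (kap' + \<mu>) \<rho> \<noteq> 0" and "expo j \<mu> < N"
  shows "diag_coeff \<mu> < diag_coeff \<rho>"
  using inflow_pos_cases[OF assms(1)] diag_coeff_less_shift_j diag_coeff_less_shift_k assms(2) by metis

definition "in_ideal_jk P \<longleftrightarrow> (\<forall>\<mu>\<in>Poly_Mapping.keys P. expo j \<mu> \<noteq> 0 \<or> expo k \<mu> \<noteq> 0)"

context
  fixes G :: cpoly and nG :: nat and C :: complex
  assumes G_nonzero: "G \<noteq> 0" and G_qhom: "qhom l (int nG) G" and deg_less: "nG < N"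
    and G_in_ideal: "in_ideal_jk G"
    and G_cofactor: "has_cofactor G (Poly_Mapping.single kap' C)"
begin

lemma expo_j_less_N:
  assumes "\<mu> \<in> Poly_Mapping.keys G"
  shows "expo j \<mu> < N"
proof -
  have "expo j \<mu> \<le> wj * expo j \<mu>"
    using weights_pos(2) by simp
  also have "\<dots> \<le> wdeg l \<mu>"
    by (simp add: wdeg_eq)
  also have "\<dots> = nG"
    using G_qhom assms by (simp add: qhom_def)
  finally show ?thesis
    using deg_less by simp
qed

text \<open>The degree bound makes \<open>diag_coeff\<close> read off \<open>\<mu>\<^sub>j\<close> and \<open>\<mu>\<^sub>k\<close> as digits in base \<open>N\<close>.\<close>

lemma diag_coeff_inj:
  assumes "\<mu> \<in> Poly_Mapping.keys G" "\<nu> \<in> Poly_Mapping.keys G" and "diag_coeff \<mu> = diag_coeff \<nu>"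
  shows "\<mu> = \<nu>"
proof -
  have "N > 0"
    using deg_less by simp
  have digits: "diag_coeff \<rho> mod N = expo j \<rho>" "diag_coeff \<rho> div N = expo k \<rho>"
    if "\<rho> \<in> Poly_Mapping.keys G" for \<rho>
    using expo_j_less_N[OF that] \<open>N > 0\<close> by (simp_all add: diag_coeff_def)
  have j: "expo j \<mu> = expo j \<nu>" and k: "expo k \<mu> = expo k \<nu>"
    using digits[OF assms(1)] digits[OF assms(2)] assms(3) by metis+
  have "wdeg l \<mu> = wdeg l \<nu>"
    using assms(1,2) G_qhom by (simp add: qhom_def)
  then have "expo i \<mu> = expo i \<nu>"
    using weights_pos(1) j k by (simp add: wdeg_eq)
  then show ?thesis
    using j k by (rule mono_eq_indicesI)
qed

lemma coeff_eq_kap'_add: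
  "(\<Sum>\<rho>\<in>Poly_Mapping.keys G. of_nat (inflow (kap' + \<mu>) \<rho>) * Poly_Mapping.lookup G \<rho>) +
     of_nat (diag_coeff \<mu>) * Poly_Mapping.lookup G \<mu> = Poly_Mapping.lookup G \<mu> * C"
proof -
  have "(\<Sum>\<rho>\<in>Poly_Mapping.keys G. (if kap' + \<rho> = kap' + \<mu> then of_nat (diag_coeff \<rho>) else 0) * Poly_Mapping.lookup G \<rho>) =
      of_nat (diag_coeff \<mu>) * Poly_Mapping.lookup G \<mu>"
    by (cases "\<mu> \<in> Poly_Mapping.keys G") (simp_all add: if_distrib[of "\<lambda>x. x * _"] in_keys_iff cong: if_cong)
  then have "Poly_Mapping.lookup (var i * X G) (kap' + \<mu>) =
      (\<Sum>\<rho>\<in>Poly_Mapping.keys G. of_nat (inflow (kap' + \<mu>) \<rho>) * Poly_Mapping.lookup G \<rho>) +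
      of_nat (diag_coeff \<mu>) * Poly_Mapping.lookup G \<mu>"
    unfolding lookup_xi_X by (simp add: distrib_right sum.distrib)
  moreover have "Poly_Mapping.lookup (var i * X G) (kap' + \<mu>) = Poly_Mapping.lookup G \<mu> * C"
    using G_cofactor by (simp add: has_cofactor_def lookup_mult_single_add)
  ultimately show ?thesis
    by simp
qed

lemma coeff_eq_off_kap':
  assumes "\<And>\<rho>. \<rho> \<in> Poly_Mapping.keys G \<Longrightarrow> kap' + \<rho> \<noteq> t"
  shows "(\<Sum>\<rho>\<in>Poly_Mapping.keys G. of_nat (inflow t \<rho>) * Poly_Mapping.lookup G \<rho>) = 0"
proof -
  have "Poly_Mapping.lookup (var i * X G) t = 0"
    using G_cofactor assms by (simp add: has_cofactor_def lookup_mult_single_eq_0)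
  then show ?thesis
    unfolding lookup_xi_X using assms by (simp cong: sum.cong)
qed

lemma cofactor_eq_highest:
  assumes "hi \<in> Poly_Mapping.keys G" and "\<And>\<mu>. \<mu> \<in> Poly_Mapping.keys G \<Longrightarrow> diag_coeff \<mu> \<le> diag_coeff hi"
  shows "C = of_nat (diag_coeff hi)"
proof -
  have "inflow (kap' + hi) \<rho> = 0" if "\<rho> \<in> Poly_Mapping.keys G" for \<rho>
    using inflow_diag_coeff_less[OF _ expo_j_less_N[OF assms(1)]] assms(2)[OF that] by fastforce
  then have "of_nat (diag_coeff hi) * Poly_Mapping.lookup G hi = Poly_Mapping.lookup G hi * C"
    using coeff_eq_kap'_add[of hi] by simp
  then show ?thesis
    using assms(1) by (simp add: in_keys_iff)
qed

text \<open>The equations \<open>coeff_eq_kap'_add\<close> are triangular with respect to \<open>diag_coeff\<close>, with positive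
  coefficients: descending from the highest monomial, all coefficients of \<open>G\<close> are nonnegative multiples
  of the highest one.\<close>

lemma coeff_ratio_nonneg:
  assumes hi: "hi \<in> Poly_Mapping.keys G"
    "\<And>\<mu>. \<mu> \<in> Poly_Mapping.keys G \<Longrightarrow> diag_coeff \<mu> \<le> diag_coeff hi"
  shows "\<mu> \<in> Poly_Mapping.keys G \<Longrightarrow> Poly_Mapping.lookup G \<mu> / Poly_Mapping.lookup G hi \<in> \<real>\<^sub>\<ge>\<^sub>0"
proof (induction "diag_coeff hi - diag_coeff \<mu>" arbitrary: \<mu> rule: less_induct)
  case less
  let ?r = "\<lambda>\<rho>. Poly_Mapping.lookup G \<rho> / Poly_Mapping.lookup G hi"
  show ?case
  proof (cases "\<mu> = hi")
    case True
    then show ?thesis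
      using hi(1) by (simp add: in_keys_iff)
  next
    case False
    then have lt: "diag_coeff \<mu> < diag_coeff hi"
      using hi(2)[OF less.prems] diag_coeff_inj[OF less.prems hi(1)] by fastforce
    have "(\<Sum>\<rho>\<in>Poly_Mapping.keys G. of_nat (inflow (kap' + \<mu>) \<rho>) * Poly_Mapping.lookup G \<rho>) =
        Poly_Mapping.lookup G \<mu> * of_nat (diag_coeff hi - diag_coeff \<mu>)"
      using coeff_eq_kap'_add[of \<mu>] lt cofactor_eq_highest[OF hi] by (simp add: of_nat_diff algebra_simps)
    then have "(\<Sum>\<rho>\<in>Poly_Mapping.keys G. of_nat (inflow (kap' + \<mu>) \<rho>) * ?r \<rho>) =
        ?r \<mu> * of_nat (diag_coeff hi - diag_coeff \<mu>)"
      by (simp add: sum_divide_distrib[symmetric])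
    then have "?r \<mu> = (\<Sum>\<rho>\<in>Poly_Mapping.keys G. of_nat (inflow (kap' + \<mu>) \<rho>) * ?r \<rho>) /
        of_nat (diag_coeff hi - diag_coeff \<mu>)"
      using lt by simp
    moreover have "of_nat (inflow (kap' + \<mu>) \<rho>) * ?r \<rho> \<in> \<real>\<^sub>\<ge>\<^sub>0" if "\<rho> \<in> Poly_Mapping.keys G" for \<rho>
    proof (cases "inflow (kap' + \<mu>) \<rho> = 0")
      case False
      then have "diag_coeff \<mu> < diag_coeff \<rho>"
        using inflow_diag_coeff_less expo_j_less_N[OF less.prems] by blast
      then have "diag_coeff hi - diag_coeff \<rho> < diag_coeff hi - diag_coeff \<mu>"
        using hi(2)[OF that] by linarith
      then have "?r \<rho> \<in> \<real>\<^sub>\<ge>\<^sub>0"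
        using less.hyps that by blast
      then show ?thesis
        by (intro nonneg_Reals_mult_I) simp_all
    qed simp
    ultimately show ?thesis
      by (simp add: nonneg_Reals_sum)
  qed
qed

text \<open>The lowest monomial contributes to a monomial of \<open>x\<^sub>i X(G)\<close> that is not of the form
  \<open>x\<^bsup>kap'\<^esup> x\<^bsup>\<rho>\<^esup>\<close> with \<open>x\<^bsup>\<rho>\<^esup>\<close> in \<open>G\<close>, and by positivity nothing can cancel it.\<close>

lemma lowest_monomial_target:
  assumes lo: "lo \<in> Poly_Mapping.keys G" "\<And>\<mu>. \<mu> \<in> Poly_Mapping.keys G \<Longrightarrow> diag_coeff lo \<le> diag_coeff \<mu>"
  obtains t where "inflow t lo \<noteq> 0" "\<And>\<rho>. \<rho> \<in> Poly_Mapping.keys G \<Longrightarrow> kap' + \<rho> \<noteq> t"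
proof (cases "expo j lo \<ge> 1")
  case True
  show ?thesis
  proof (rule that[of "shift_j lo"])
    show "inflow (shift_j lo) lo \<noteq> 0"
      using True by (simp add: inflow_def)
    show "kap' + \<rho> \<noteq> shift_j lo" if "\<rho> \<in> Poly_Mapping.keys G" for \<rho>
      using diag_coeff_less_kap'_shift_j[OF True] lo(2)[OF that] by fastforce
  qed
next
  case False
  then have k: "expo k lo \<ge> 1"
    using G_in_ideal lo(1) by (auto simp: in_ideal_jk_def)
  show ?thesis
  proof (rule that[of "shift_k lo"])
    show "inflow (shift_k lo) lo \<noteq> 0"
      using k by (simp add: inflow_def)
    show "kap' + \<rho> \<noteq> shift_k lo" if "\<rho> \<in> Poly_Mapping.keys G" for \<rho>
      using diag_coeff_less_kap'_shift_k[OF k] lo(2)[OF that] deg_less by fastforce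
  qed
qed

lemma no_monomial_cofactor: False
proof -
  obtain hi where hi: "hi \<in> Poly_Mapping.keys G"
    "\<And>\<mu>. \<mu> \<in> Poly_Mapping.keys G \<Longrightarrow> diag_coeff \<mu> \<le> diag_coeff hi"
    using finite_max_obtain[of "Poly_Mapping.keys G" diag_coeff] G_nonzero by auto
  obtain lo where lo: "lo \<in> Poly_Mapping.keys G"
    "\<And>\<mu>. \<mu> \<in> Poly_Mapping.keys G \<Longrightarrow> diag_coeff lo \<le> diag_coeff \<mu>"
    using finite_min_obtain[of "Poly_Mapping.keys G" diag_coeff] G_nonzero by auto
  obtain t where t: "inflow t lo \<noteq> 0" "\<And>\<rho>. \<rho> \<in> Poly_Mapping.keys G \<Longrightarrow> kap' + \<rho> \<noteq> t"
    using lowest_monomial_target[OF lo] by blast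
  let ?r = "\<lambda>\<rho>. Poly_Mapping.lookup G \<rho> / Poly_Mapping.lookup G hi"
  have "(\<Sum>\<rho>\<in>Poly_Mapping.keys G. of_nat (inflow t \<rho>) * ?r \<rho>) = 0"
    using coeff_eq_off_kap'[OF t(2)] by (simp add: sum_divide_distrib[symmetric])
  then have "of_nat (inflow t lo) * ?r lo = 0"
    using coeff_ratio_nonneg[OF hi] lo(1)
    by (intro nonneg_Reals_sum_eq_0D[where f = "\<lambda>\<rho>. of_nat (inflow t \<rho>) * ?r \<rho>"] nonneg_Reals_mult_I) simp_all
  with t(1) lo(1) hi(1) show False
    by (simp add: in_keys_iff)
qed

end

lemma keys_reweight_rot [simp]: "Poly_Mapping.keys (reweight (rot r) P) = Poly_Mapping.keys P"
  by (rule keys_reweight) (simp add: rot_def)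

lemma in_ideal_jk_mult:
  assumes "in_ideal_jk P"
  shows "in_ideal_jk (P * Q)"
  unfolding in_ideal_jk_def
proof
  fix \<mu>
  assume "\<mu> \<in> Poly_Mapping.keys (P * Q)"
  then obtain x y where "\<mu> = x + y" and "x \<in> Poly_Mapping.keys P"
    using keys_mult[of P Q] by blast
  with assms show "expo j \<mu> \<noteq> 0 \<or> expo k \<mu> \<noteq> 0"
    by (auto simp: in_ideal_jk_def)
qed

lemma in_ideal_jk_if_vanishes:
  assumes "qhom l (int n) F" and "evalp F (pt i) = 0"
  shows "in_ideal_jk F"
  unfolding in_ideal_jk_def
  using evalp_pt_eq_0_imp[OF assms(1) indices(1) weights_pos(1) assms(2)] index_cases by blast

lemma orbit_prod:
  assumes "F \<noteq> 0" and hom: "qhom l (int n) F" and "in_ideal_jk F"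
  shows "(\<Prod>r<\<beta>+1. reweight (rot r) F) \<noteq> 0"
    and "qhom l (int ((\<beta> + 1) * n)) (\<Prod>r<\<beta>+1. reweight (rot r) F)"
    and "in_ideal_jk (\<Prod>r<\<beta>+1. reweight (rot r) F)"
proof -
  let ?G = "\<Prod>r<\<beta>+1. reweight (rot r) F"
  have "reweight (rot r) F \<noteq> 0" for r
    using \<open>F \<noteq> 0\<close> keys_reweight_rot[of r F] by (metis keys_eq_empty)
  then show "?G \<noteq> 0"
    by (simp add: prod_zero_iff)
  have "qhom l (int n) (reweight (rot r) F)" for r
    using hom by (simp add: qhom_def)
  then have "qhom l (of_nat (card {..<\<beta>+1}) * int n) ?G"
    by (intro qhom_prod)
  then show "qhom l (int ((\<beta> + 1) * n)) ?G"
    by (simp add: algebra_simps)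
  have "in_ideal_jk (reweight (rot 0) F * (\<Prod>r<\<beta>. reweight (rot (Suc r)) F))"
    using \<open>in_ideal_jk F\<close> by (intro in_ideal_jk_mult) (simp add: in_ideal_jk_def)
  then show "in_ideal_jk ?G"
    by (simp only: Suc_eq_plus1[symmetric] prod.lessThan_Suc_shift)
qed

theorem Cpt_ne_Fol:
  assumes N: "N = (\<beta> + 1) * n + 1"
  shows "Cpt l i n deg \<noteq> Fol l deg"
proof
  assume "Cpt l i n deg = Fol l deg"
  moreover have "{scale_form c \<omega> | c. c \<noteq> 0} \<in> Fol l deg"
    unfolding Fol_def using fol_form_omega by blast
  ultimately have "{scale_form c \<omega> | c. c \<noteq> 0} \<in> Cpt l i n deg"
    by simp
  then obtain c F where "c \<noteq> 0" and inv: "invariant (scale_form c \<omega>) F"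
    and curve: "curve_poly l n F" and vanish: "evalp F (pt i) = 0"
    unfolding Cpt_def by blast
  obtain \<Theta> where cof: "has_cofactor F \<Theta>"
    using invariant_imp_has_cofactor[OF \<open>c \<noteq> 0\<close> inv] .
  have "F \<noteq> 0" and hom: "qhom l (int n) F"
    using curve by (auto simp: curve_poly_def)
  have cof_G: "has_cofactor (\<Prod>r<\<beta>+1. reweight (rot r) F)
      (Poly_Mapping.single kap' (of_nat (\<beta> + 1) * Poly_Mapping.lookup \<Theta> kap'))"
    using has_cofactor_orbit_prod[OF cof, of "\<beta> + 1"] unfolding orbit_cofactor_monomial[OF cof \<open>F \<noteq> 0\<close> hom] .
  note G = orbit_prod[OF \<open>F \<noteq> 0\<close> hom in_ideal_jk_if_vanishes[OF hom vanish]]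
  show False
    by (rule no_monomial_cofactor[OF G(1,2) _ G(3) cof_G]) (use N in simp)
qed

end

section \<open>Choosing the exponents\<close>

lemma exists_mod_solution:
  fixes a m c :: nat
  assumes "coprime a m" and "m \<ge> 1"
  obtains b where "b < m" "(a * b) mod m = c mod m"
proof (cases "a = 0")
  case True
  with assms have "m = 1"
    by simp
  with that show ?thesis
    by simp
next
  case False
  obtain x y where xy: "a * x = m * y + 1"
    using bezout_nat[of a m] False assms(1) by auto
  have "(a * ((x * c) mod m)) mod m = ((m * y + 1) * c) mod m"
    by (simp add: mod_mult_right_eq mult.assoc[symmetric] xy)
  also have "\<dots> = (c + m * (y * c)) mod m"
    by (simp add: algebra_simps)
  also have "\<dots> = c mod m"
    by simp
  finally show ?thesis
    using assms(2) by (intro that[of "(x * c) mod m"]) simp_all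
qed

lemma mod_eq_imp_add_mult:
  fixes x y m :: nat
  assumes "x mod m = y mod m" and "y \<le> x"
  obtains c where "y + m * c = x"
proof -
  have "m dvd x - y"
    using assms mod_eq_dvd_iff_nat by blast
  then obtain c where "x - y = m * c"
    by blast
  then show ?thesis
    using assms(2) by (intro that[of c]) simp
qed

text \<open>Where the lower bound on the degree enters: \<open>\<beta>\<close> is forced modulo \<open>l\<^sub>i\<close> by the degree of
  \<open>X\<^sub>j\<close>, and the exponent \<open>kap\<close> needs \<open>l\<^sub>j (l\<^sub>i - 1) + l\<^sub>k \<beta> \<le> e\<close>.\<close>

lemma witness_foliation_exists:
  fixes l :: "nat \<times> nat \<times> nat" and i j k e :: nat
  defines "m \<equiv> expo i l" and "wj \<equiv> expo j l" and "wk \<equiv> expo k l"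
  assumes indices: "i \<le> 2" "j \<le> 2" "k \<le> 2" "i \<noteq> j" "i \<noteq> k" "j < k"
    and weights_pos: "m \<ge> 1" "wj \<ge> 1" "wk \<ge> 1"
    and coprime: "coprime wj m" "coprime wk m"
    and bound: "\<And>\<beta>. \<beta> < m \<Longrightarrow> (wk * \<beta>) mod m = (e + wj) mod m \<Longrightarrow> wj * (m - 1) + wk * \<beta> \<le> e"
  obtains \<alpha> \<beta> c1 c2 c3 where "witness_foliation l i j k e \<alpha> \<beta> c1 c2 c3"
proof -
  obtain \<beta> where \<beta>: "\<beta> < m" "(wk * \<beta>) mod m = (e + wj) mod m"
    using exists_mod_solution[OF coprime(2) weights_pos(1)] by metis
  have kap_bound: "wj * (m - 1) + wk * \<beta> \<le> e"
    using bound \<beta> by blast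
  obtain \<alpha> where \<alpha>: "\<alpha> < m" "(wj * \<alpha>) mod m = (e + wk) mod m"
    using exists_mod_solution[OF coprime(1) weights_pos(1)] by metis
  have "wk * \<beta> \<le> e + wj"
    using kap_bound by linarith
  then obtain c1 where c1: "wk * \<beta> + m * c1 = e + wj"
    by (rule mod_eq_imp_add_mult[OF \<beta>(2)[symmetric]])
  have "wj * \<alpha> \<le> wj * (m - 1)"
    using \<alpha>(1) by (intro mult_le_mono2) simp
  then have "wj * \<alpha> \<le> e + wk"
    using kap_bound by linarith
  then obtain c2 where c2: "wj * \<alpha> + m * c2 = e + wk"
    by (rule mod_eq_imp_add_mult[OF \<alpha>(2)[symmetric]])
  have wj_m: "wj * (m - 1) + wj = wj * m"
    using weights_pos(1) by (simp add: algebra_simps)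
  then have "wj * m \<le> m * c1"
    using c1 kap_bound by linarith
  then have "wj \<le> c1"
    using weights_pos(1) by (simp add: mult.commute)
  have c3: "wj * (m - 1) + wk * \<beta> + m * (c1 - wj) = e"
    using c1 wj_m \<open>wj * m \<le> m * c1\<close> by (simp add: diff_mult_distrib2 mult.commute)
  have "witness_foliation l i j k e \<alpha> \<beta> c1 c2 (c1 - wj)"
    by unfold_locales (use indices weights_pos \<alpha>(1) c1 c2 c3 coprime in \<open>simp_all add: m_def wj_def wk_def\<close>)
  then show ?thesis
    using that by blast
qed

theorem Cpt_ne_Fol_if_congruence_bound:
  fixes l :: "nat \<times> nat \<times> nat" and i j k e :: nat
  defines "m \<equiv> expo i l" and "wj \<equiv> expo j l" and "wk \<equiv> expo k l"
  assumes "i \<le> 2" "j \<le> 2" "k \<le> 2" "i \<noteq> j" "i \<noteq> k" "j < k"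
    and "m \<ge> 1" "wj \<ge> 1" "wk \<ge> 1" and "coprime wj m" "coprime wk m"
    and "\<And>\<beta>. \<beta> < m \<Longrightarrow> (wk * \<beta>) mod m = (e + wj) mod m \<Longrightarrow> wj * (m - 1) + wk * \<beta> \<le> e"
  shows "Cpt l i n (e + m + wj + wk) \<noteq> Fol l (e + m + wj + wk)"
proof -
  obtain \<alpha> \<beta> c1 c2 c3 where "witness_foliation l i j k e \<alpha> \<beta> c1 c2 c3"
    using witness_foliation_exists[where l = l and i = i and j = j and k = k and e = e] assms by blast
  then interpret witness_foliation l i j k e \<alpha> \<beta> c1 c2 c3 "(\<beta> + 1) * n + 1" .
  show ?thesis
    using Cpt_ne_Fol by (simp add: m_def wj_def wk_def)
qed

corollary Cpt_ne_Fol_large_degree: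
  fixes l :: "nat \<times> nat \<times> nat" and i j k d n :: nat
  assumes "i \<le> 2" "j \<le> 2" "k \<le> 2" "i \<noteq> j" "i \<noteq> k" "j < k"
    and "expo i l \<ge> 1" "expo j l \<ge> 1" "expo k l \<ge> 1"
    and "coprime (expo j l) (expo i l)" "coprime (expo k l) (expo i l)"
    and d: "expo i l * (expo j l + expo k l + 1) \<le> d"
  shows "Cpt l i n d \<noteq> Fol l d"
proof -
  define m wj wk where "m = expo i l" and "wj = expo j l" and "wk = expo k l"
  define e where "e = d - (m + wj + wk)"
  have d': "m * (wj + wk + 1) \<le> d"
    using d by (simp add: m_def wj_def wk_def)
  have split: "m * (wj + wk + 1) = wj * (m - 1) + wk * (m - 1) + (m + wj + wk)"
    using assms(7) by (cases m) (simp_all add: m_def algebra_simps)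
  have "d = e + m + wj + wk"
    using d' split unfolding e_def by linarith
  moreover have "wj * (m - 1) + wk * \<beta> \<le> e" if "\<beta> < m" for \<beta>
  proof -
    have "wk * \<beta> \<le> wk * (m - 1)"
      using that by (intro mult_le_mono2) simp
    then show ?thesis
      using d' split unfolding e_def by linarith
  qed
  ultimately show ?thesis
    using Cpt_ne_Fol_if_congruence_bound[where l = l and i = i and j = j and k = k and e = e and n = n] assms
    by (simp add: m_def wj_def wk_def)
qed

corollary Cpt_ne_Fol_unit_weights:
  fixes l :: "nat \<times> nat \<times> nat" and i j k d n :: nat
  assumes "i \<le> 2" "j \<le> 2" "k \<le> 2" "i \<noteq> j" "i \<noteq> k" "j < k"
    and "expo j l = 1" "expo k l = 1" and m: "expo i l \<ge> 2" and d: "d \<ge> 2 * expo i l + 1"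
  shows "Cpt l i n d \<noteq> Fol l d"
proof -
  define m where "m = expo i l"
  define e where "e = d - (m + 1 + 1)"
  have m2: "m \<ge> 2"
    using m by (simp add: m_def)
  have "d = e + m + 1 + 1" and e: "e \<ge> m - 1"
    using d m unfolding e_def m_def by arith+
  moreover have "(m - 1) + \<beta> \<le> e" if "\<beta> < m" and \<beta>: "\<beta> mod m = (e + 1) mod m" for \<beta>
  proof (cases "\<beta> = 0")
    case False
    have eq: "e + 1 = m * ((e + 1) div m) + \<beta>"
      using \<beta> that(1) by simp
    have "(e + 1) div m \<noteq> 0"
    proof
      assume "(e + 1) div m = 0"
      with eq have "e + 1 = \<beta>"
        by simp
      with that(1) e show False
        by linarith
    qed
    then have "m \<le> m * ((e + 1) div m)"
      by simp
    with eq m2 show ?thesis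
      by linarith
  qed (use e in simp)
  ultimately show ?thesis
    using Cpt_ne_Fol_if_congruence_bound[where l = l and i = i and j = j and k = k and e = e and n = n] assms
    by (simp add: m_def)
qed

theorem corollary4p7:
  fixes l0 l1 l2 :: nat
  assumes "coprime l0 l1" and "coprime l0 l2" and "coprime l1 l2"
    and "1 \<le> l0" and "l0 \<le> l1" and "l1 \<le> l2"
  shows "(\<forall>d n i. d \<ge> l2 * l1 + l2 * l0 + l2 \<and> i \<le> 2 \<longrightarrow>
             Cpt (l0, l1, l2) i n d \<noteq> Fol (l0, l1, l2) d)
       \<and> (l0 = 1 \<and> l1 = 1 \<and> l2 \<ge> 2 \<longrightarrow>
             (\<forall>d n. d \<ge> 2 * l2 + 1 \<longrightarrow> Cpt (l0, l1, l2) 2 n d \<noteq> Fol (l0, l1, l2) d))"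
proof (intro conjI allI impI; elim conjE)
  fix d n i :: nat
  assume d: "d \<ge> l2 * l1 + l2 * l0 + l2" and "i \<le> 2"
  have "l0 * l1 \<le> l2 * l1" "l1 * l0 \<le> l2 * l0" "l0 * l2 = l2 * l0" "l1 * l2 = l2 * l1"
    using assms(5,6) by simp_all
  then have "l0 * (l1 + l2 + 1) \<le> d" "l1 * (l0 + l2 + 1) \<le> d" "l2 * (l0 + l1 + 1) \<le> d"
    using d assms(5,6) unfolding distrib_left mult_1_right by linarith+
  moreover have "i = 0 \<or> i = 1 \<or> i = 2"
    using \<open>i \<le> 2\<close> by auto
  ultimately show "Cpt (l0, l1, l2) i n d \<noteq> Fol (l0, l1, l2) d"
    using assms Cpt_ne_Fol_large_degree[where i = 0 and j = 1 and k = 2]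
      Cpt_ne_Fol_large_degree[where i = 1 and j = 0 and k = 2]
      Cpt_ne_Fol_large_degree[where i = 2 and j = 0 and k = 1]
    by (auto simp: coprime_commute)
next
  fix d n :: nat
  assume "l0 = 1" "l1 = 1" "l2 \<ge> 2" "d \<ge> 2 * l2 + 1"
  then show "Cpt (l0, l1, l2) 2 n d \<noteq> Fol (l0, l1, l2) d"
    by (intro Cpt_ne_Fol_unit_weights[of 2 0 1]) simp_all
qed

end
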